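(* Let $\tau\in\Gamma_S^\infty$ be a tree with a unique infinite spine, and suppose that its Hausdorff dimension $d_h$, its hull dimension $\bar d_h$ and its spectral dimension $d_s$ all exist (in the strong senses defined in the context). Then $$\frac{2d_h}{1+d_h}\;\le\; d_s\;\le\;\frac{2\bar d_h}{1+\bar d_h}.$$
   Context: $\Gamma$ is the set of planar (ordered) rooted, locally finite trees whose root $r$ has degree one. $\Gamma_S^\infty\subset\Gamma$ is the set of infinite trees in $\Gamma$ containing exactly one infinite non-backtracking path starting at $r$, called the spine; its vertices, ordered away from $r$, are $s_1,s_2,s_3,\dots$ (set $s_0=r$). For a graph $G$, $|G|$ denotes its number of edges. For $R\ge1$, the ball $\mathcal B_R$ is the subgraph of $\tau$ spanned by the vertices at graph distance at most $R$ from $r$. For $i\ge1$, $\mathcal A^i$ is the connected component containing $s_i$ of the graph obtained from $\tau$ by deleting the spine edges $\{s_{i-1},s_i\}$ and $\{s_i,s_{i+1}\}$ (i.e. $s_i$ together with the finite trees attached to it). The hull $\bar{\mathcal B}_R$ is the union of the spine path from $r$ to $s_R$ and $\mathcal A^1,\dots,\mathcal A^R$; thus $|\bar{\mathcal B}_R|=R+\sum_{i=1}^R|\mathcal A^i|$ and $\mathcal B_R\subseteq\bar{\mathcal B}_R$. A positive measurable function $L$ is slowly varying at infinity if $L(\lambda R)/L(R)\to1$ as $R\to\infty$ for every $\lambda>0$; $l$ is slowly varying at $0^+$ if $x\mapsto l(1/x)$ is slowly varying at infinity. The Hausdorff dimension $d_h$ of $\tau$ exists (strong sense) if there are $R_0>0$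 and functions $\underline L,\bar L$ slowly varying at infinity such that $R^{d_h}\underline L(R)<|\mathcal B_R|<R^{d_h}\bar L(R)$ for all $R>R_0$. The hull dimension $\bar d_h$ is defined in the same way with $\bar{\mathcal B}_R$ in place of $\mathcal B_R$. Consider simple random walk on $\tau$ (at each step it jumps to a uniformly chosen neighbour), started at $r$. For $x\in(0,1]$ let $Q_\tau(x)=\sum_{t\ge0}\mathbb P(\omega(t)=r\mid\omega(0)=r)(1-x)^{t/2}$ be the generating function of return probabilities. The spectral dimension $d_s$ of $\tau$ exists (strong sense) if there are $x_0\in(0,1)$ and functions $\underline l,\bar l$ slowly varying at $0^+$ with $x^{-1+d_s/2}\underline l(x)<Q_\tau(x)<x^{-1+d_s/2}\bar l(x)$ for all $x<x_0$. *)

theory Defs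
  imports "HOL-Analysis.Analysis"
begin

text \<open>A planar (ordered) rooted locally finite tree is encoded as a set of
vertices of type nat list: the root is [], the children of v are v@[0], v@[1], ...
(in planar order).  The edges are exactly the pairs (v, v@[i]).\<close>

definition planar_tree :: "nat list set \<Rightarrow> bool" where
  "planar_tree T \<longleftrightarrow>
     [] \<in> T \<and>
     (\<forall>v w. v @ w \<in> T \<longrightarrow> v \<in> T) \<and>
     (\<forall>v i. v @ [Suc i] \<in> T \<longrightarrow> v @ [i] \<in> T) \<and>
     (\<forall>v\<in>T. finite {i. v @ [i] \<in> T})"

text \<open>The class Gamma: root has degree one (its only child is [0]).\<close>
definition Gamma :: "nat list set \<Rightarrow> bool" where
  "Gamma T \<longleftrightarrow> planar_tree T \<and> [0] \<in> T \<and> [1] \<notin> T"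

text \<open>Infinite non-backtracking paths starting at the root: in a tree these
always move from a vertex to one of its children.\<close>
definition ray :: "nat list set \<Rightarrow> (nat \<Rightarrow> nat list) \<Rightarrow> bool" where
  "ray T f \<longleftrightarrow> f 0 = [] \<and> (\<forall>k. f (Suc k) \<in> T \<and> (\<exists>i. f (Suc k) = f k @ [i]))"

definition Gamma_S_inf :: "nat list set \<Rightarrow> bool" where
  "Gamma_S_inf T \<longleftrightarrow> Gamma T \<and> infinite T \<and> (\<exists>!f. ray T f)"

definition spine :: "nat list set \<Rightarrow> nat \<Rightarrow> nat list" where
  "spine T = (THE f. ray T f)"

text \<open>Edges (parent, child) of the ball B_R: both endpoints at distance \<le> R from the root
(the distance of v from the root is length v).\<close>
definition ball_edges :: "nat list set \<Rightarrow> nat \<Rightarrow> (nat list \<times> nat list) set" where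
  "ball_edges T R = {(u, v). u \<in> T \<and> v \<in> T \<and> (\<exists>i. v = u @ [i]) \<and> length u \<le> R \<and> length v \<le> R}"

definition ball_size :: "nat list set \<Rightarrow> nat \<Rightarrow> nat" where
  "ball_size T R = card (ball_edges T R)"

text \<open>Vertices of A^i: s_i together with the finite trees attached to it, i.e. the
descendants of s_i that are not descendants of s_(i+1).\<close>
definition A_verts :: "nat list set \<Rightarrow> nat \<Rightarrow> nat list set" where
  "A_verts T i = {v \<in> T. (\<exists>w. v = spine T i @ w) \<and> \<not> (\<exists>w. v = spine T (Suc i) @ w)}"

definition A_edges :: "nat list set \<Rightarrow> nat \<Rightarrow> (nat list \<times> nat list) set" where
  "A_edges T i = {(u, v). u \<in> A_verts T i \<and> v \<in> A_verts T i \<and> (\<exists>j. v = u @ [j])}"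

definition hull_size :: "nat list set \<Rightarrow> nat \<Rightarrow> nat" where
  "hull_size T R = R + (\<Sum>i=1..R. card (A_edges T i))"

definition nbrs :: "nat list set \<Rightarrow> nat list \<Rightarrow> nat list set" where
  "nbrs T v = {u. u \<in> T \<and> v \<in> T \<and> ((\<exists>i. u = v @ [i]) \<or> (\<exists>i. v = u @ [i]))}"

text \<open>walk_prob T t v = P(omega(t) = v | omega(0) = r) for simple random walk.\<close>
fun walk_prob :: "nat list set \<Rightarrow> nat \<Rightarrow> nat list \<Rightarrow> real" where
  "walk_prob T 0 v = (if v = [] then 1 else 0)"
| "walk_prob T (Suc t) v = (\<Sum>u\<in>nbrs T v. walk_prob T t u / real (card (nbrs T u)))"

definition Q_gen :: "nat list set \<Rightarrow> real \<Rightarrow> real" where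
  "Q_gen T x = (\<Sum>t. walk_prob T t [] * (1 - x) powr (real t / 2))"

definition slowly_varying :: "(real \<Rightarrow> real) \<Rightarrow> bool" where
  "slowly_varying L \<longleftrightarrow> (\<forall>x>0. L x > 0) \<and> L \<in> borel_measurable borel \<and>
     (\<forall>c>0. ((\<lambda>R. L (c * R) / L R) \<longlongrightarrow> 1) at_top)"

definition slowly_varying_at_0 :: "(real \<Rightarrow> real) \<Rightarrow> bool" where
  "slowly_varying_at_0 l \<longleftrightarrow> slowly_varying (\<lambda>x. l (1 / x))"

definition has_hausdorff_dim :: "nat list set \<Rightarrow> real \<Rightarrow> bool" where
  "has_hausdorff_dim T d \<longleftrightarrow> (\<exists>R0 Llo Lhi. R0 > 0 \<and> slowly_varying Llo \<and> slowly_varying Lhi \<and>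
     (\<forall>R::nat. real R > R0 \<longrightarrow>
        real R powr d * Llo (real R) < real (ball_size T R) \<and>
        real (ball_size T R) < real R powr d * Lhi (real R)))"

definition has_hull_dim :: "nat list set \<Rightarrow> real \<Rightarrow> bool" where
  "has_hull_dim T d \<longleftrightarrow> (\<exists>R0 Llo Lhi. R0 > 0 \<and> slowly_varying Llo \<and> slowly_varying Lhi \<and>
     (\<forall>R::nat. real R > R0 \<longrightarrow>
        real R powr d * Llo (real R) < real (hull_size T R) \<and>
        real (hull_size T R) < real R powr d * Lhi (real R)))"

definition has_spectral_dim :: "nat list set \<Rightarrow> real \<Rightarrow> bool" where
  "has_spectral_dim T d \<longleftrightarrow> (\<exists>x0 llo lhi. 0 < x0 \<and> x0 < 1 \<and>
     slowly_varying_at_0 llo \<and> slowly_varying_at_0 lhi \<and>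
     (\<forall>x. 0 < x \<and> x < x0 \<longrightarrow>
        x powr (-1 + d / 2) * llo x < Q_gen T x \<and>
        Q_gen T x < x powr (-1 + d / 2) * lhi x))"

end

theory Submission
  imports Defs
begin

text \<open>Write z = sqrt(1 - x), so that Q(x) is the limit of the truncated Green function
  G(v) = sum of z^t P(walk at v at time t) at the root.  The density h = G / deg solves
  (D - z A) h = delta_root up to an error that vanishes as the truncation grows, where D and A
  are the degree and adjacency operators, and the associated Dirichlet form
  E(f) = (1 - z) sum deg f^2 + z/2 sum (f(u) - f(v))^2 is nonnegative.  Hence E(h) <= h(root),
  which forces h(root), and so Q(x), to be at most about R + 1/(x |B_R|): either h stays large on
  the whole ball B_R, or it drops along a path of length R.  Conversely, Cauchy--Schwarz for E
  applied to h and to the test function decreasing linearly from 1 to 0 along the first R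
  spine vertices and constant on the branches A^i gives 1 <= Q(x) (x |hull_R| + 1/R).  Choosing
  R and x along geometric sequences with x about R^-(1+d) turns these two inequalities and the
  power laws for |B_R|, |hull_R| and Q into the two bounds on ds.\<close>

section \<open>Trees and simple random walk\<close>

definition deg :: "nat list set \<Rightarrow> nat list \<Rightarrow> nat" where
  "deg T v = card (nbrs T v)"

definition ball_verts :: "nat list set \<Rightarrow> nat \<Rightarrow> nat list set" where
  "ball_verts T R = {v \<in> T. length v \<le> R}"

lemma Gamma_planar_tree: "Gamma T \<Longrightarrow> planar_tree T"
  unfolding Gamma_def by simp

lemma Gamma_S_inf_Gamma: "Gamma_S_inf T \<Longrightarrow> Gamma T"
  unfolding Gamma_S_inf_def by simp

lemma planar_tree_root: "planar_tree T \<Longrightarrow> [] \<in> T"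
  unfolding planar_tree_def by blast

lemma planar_tree_prefix: "planar_tree T \<Longrightarrow> v @ w \<in> T \<Longrightarrow> v \<in> T"
  unfolding planar_tree_def by blast

lemma planar_tree_finite_children: "planar_tree T \<Longrightarrow> v \<in> T \<Longrightarrow> finite {i. v @ [i] \<in> T}"
  unfolding planar_tree_def by blast

lemma planar_tree_left_sibling:
  assumes "planar_tree T" "v @ [i] \<in> T" "j \<le> i"
  shows "v @ [j] \<in> T"
  using assms(2,3)
proof (induction i)
  case (Suc i)
  then show ?case using assms(1) unfolding planar_tree_def by (metis le_Suc_eq)
qed simp

lemma nbrs_sym: "u \<in> nbrs T v \<longleftrightarrow> v \<in> nbrs T u"
  unfolding nbrs_def by auto

lemma finite_nbrs:
  assumes "planar_tree T"
  shows "finite (nbrs T v)"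
proof -
  have "nbrs T v \<subseteq> insert (butlast v) ((\<lambda>i. v @ [i]) ` {i. v @ [i] \<in> T})"
    unfolding nbrs_def by auto
  moreover have "v \<notin> T \<Longrightarrow> nbrs T v = {}"
    unfolding nbrs_def by auto
  ultimately show ?thesis
    using planar_tree_finite_children[OF assms]
    by (metis finite.emptyI finite_imageI finite_insert finite_subset)
qed

lemma Gamma_root_child: "Gamma T \<Longrightarrow> [i] \<in> T \<Longrightarrow> i = 0"
  using planar_tree_left_sibling[of T "[]" i 1] unfolding Gamma_def by fastforce

lemma nbrs_root: "Gamma T \<Longrightarrow> nbrs T [] = {[0]}"
  using Gamma_root_child planar_tree_root unfolding nbrs_def Gamma_def by auto

lemma deg_root: "Gamma T \<Longrightarrow> deg T [] = 1"
  using nbrs_root unfolding deg_def by simp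

lemma deg_pos:
  assumes "Gamma T" "v \<in> T"
  shows "deg T v > 0"
proof -
  have "nbrs T v \<noteq> {}"
  proof (cases "v = []")
    case False
    then have "v = butlast v @ [last v]" by simp
    then have "butlast v \<in> nbrs T v"
      using assms planar_tree_prefix[of T "butlast v" "[last v]"] unfolding nbrs_def Gamma_def by auto
    then show ?thesis by auto
  qed (use nbrs_root[OF assms(1)] in simp)
  then show ?thesis
    using finite_nbrs[OF Gamma_planar_tree[OF assms(1)]] unfolding deg_def by (simp add: card_gt_0_iff)
qed

lemma finite_ball_verts:
  assumes "planar_tree T"
  shows "finite (ball_verts T R)"
proof (induction R)
  case 0
  have "ball_verts T 0 \<subseteq> {[]}" unfolding ball_verts_def by auto
  then show ?case using finite_subset by blast
next
  case (Suc R)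
  have "ball_verts T (Suc R) \<subseteq> ball_verts T R \<union> (\<Union>v\<in>ball_verts T R. nbrs T v)"
  proof
    fix w assume w: "w \<in> ball_verts T (Suc R)"
    show "w \<in> ball_verts T R \<union> (\<Union>v\<in>ball_verts T R. nbrs T v)"
    proof (cases "length w \<le> R")
      case False
      then have wb: "w = butlast w @ [last w]" by (metis append_butlast_last_id le0 list.size(3))
      then have "butlast w \<in> ball_verts T R" "w \<in> nbrs T (butlast w)"
        using w planar_tree_prefix[OF assms, of "butlast w" "[last w]"] unfolding ball_verts_def nbrs_def
        by auto
      then show ?thesis by blast
    qed (use w in \<open>auto simp: ball_verts_def\<close>)
  qed
  then show ?case using Suc finite_nbrs[OF assms] by (meson finite_UN_I finite_Un finite_subset)
qed

lemma root_in_ball_verts: "planar_tree T \<Longrightarrow> [] \<in> ball_verts T R"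
  unfolding ball_verts_def using planar_tree_root by simp

lemma walk_prob_nonneg: "walk_prob T t v \<ge> 0"
  by (induction t arbitrary: v) (auto intro!: sum_nonneg divide_nonneg_nonneg)

lemma walk_prob_support:
  assumes "planar_tree T" "walk_prob T t v \<noteq> 0"
  shows "v \<in> T \<and> length v \<le> t"
  using assms(2)
proof (induction t arbitrary: v)
  case 0 then show ?case using planar_tree_root[OF assms(1)] by (auto split: if_splits)
next
  case (Suc t)
  then obtain u where u: "u \<in> nbrs T v" "walk_prob T t u \<noteq> 0"
    using sum.neutral by force
  then have "length u \<le> t" using Suc.IH by auto
  with u(1) show ?case unfolding nbrs_def by auto
qed

lemma sum_nbrs_swap:
  assumes "finite S"
  shows "(\<Sum>v\<in>S. \<Sum>u\<in>{u\<in>S. u \<in> nbrs T v}. F v u)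
       = (\<Sum>u\<in>S. \<Sum>v\<in>{v\<in>S. v \<in> nbrs T u}. F v u)"
proof -
  have "\<And>u. {v. v \<in> S \<and> u \<in> nbrs T v} = {v\<in>S. v \<in> nbrs T u}" using nbrs_sym by blast
  then show ?thesis using sum.swap_restrict[OF assms assms, of F "\<lambda>v u. u \<in> nbrs T v"] by simp
qed

text \<open>One step spreads the mass at u evenly over its deg T u neighbours, only some of which
  lie in S.\<close>
lemma walk_prob_sum_le_1:
  assumes "Gamma T" "finite S"
  shows "(\<Sum>v\<in>S. walk_prob T t v) \<le> 1"
  using assms(2)
proof (induction t arbitrary: S)
  case 0
  then show ?case by (simp add: sum.delta')
next
  case (Suc t)
  have pt: "planar_tree T" using Gamma_planar_tree[OF assms(1)] .
  define S' where "S' = (\<Union>v\<in>S. nbrs T v)"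
  define p where "p u = walk_prob T t u / real (deg T u)" for u
  have fS': "finite S'" unfolding S'_def using Suc.prems finite_nbrs[OF pt] by blast
  have "(\<Sum>v\<in>S. walk_prob T (Suc t) v) = (\<Sum>v\<in>S. \<Sum>u\<in>{u\<in>S'. v \<in> nbrs T u}. p u)"
  proof (rule sum.cong[OF refl])
    fix v assume "v \<in> S"
    then have "{u\<in>S'. v \<in> nbrs T u} = nbrs T v" unfolding S'_def using nbrs_sym by blast
    then show "walk_prob T (Suc t) v = (\<Sum>u\<in>{u\<in>S'. v \<in> nbrs T u}. p u)"
      by (simp add: p_def deg_def)
  qed
  also have "\<dots> = (\<Sum>u\<in>S'. real (card {v\<in>S. v \<in> nbrs T u}) * p u)"
    using sum.swap_restrict[OF Suc.prems fS', of "\<lambda>v u. p u" "\<lambda>v u. v \<in> nbrs T u"] by simp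
  also have "\<dots> \<le> (\<Sum>u\<in>S'. walk_prob T t u)"
  proof (rule sum_mono)
    fix u
    have "card {v\<in>S. v \<in> nbrs T u} \<le> deg T u"
      unfolding deg_def by (rule card_mono[OF finite_nbrs[OF pt]]) blast
    then show "real (card {v\<in>S. v \<in> nbrs T u}) * p u \<le> walk_prob T t u"
      unfolding p_def using walk_prob_nonneg[of T t u]
      by (cases "deg T u = 0") (auto simp: field_simps mult_left_mono)
  qed
  also have "\<dots> \<le> 1" by (rule Suc.IH[OF fS'])
  finally show ?case .
qed

lemma walk_prob_le_1: "Gamma T \<Longrightarrow> walk_prob T t v \<le> 1"
  using walk_prob_sum_le_1[of T "{v}" t] by simp

section \<open>The truncated Green function and the Dirichlet form\<close>

definition green_partial :: "nat list set \<Rightarrow> real \<Rightarrow> nat \<Rightarrow> nat list \<Rightarrow> real" where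
  "green_partial T z N v = (\<Sum>t\<le>N. walk_prob T t v * z ^ t)"

definition green_density :: "nat list set \<Rightarrow> real \<Rightarrow> nat \<Rightarrow> nat list \<Rightarrow> real" where
  "green_density T z N v = green_partial T z N v / real (deg T v)"

definition dirichlet_form ::
    "nat list set \<Rightarrow> real \<Rightarrow> nat list set \<Rightarrow> (nat list \<Rightarrow> real) \<Rightarrow> (nat list \<Rightarrow> real) \<Rightarrow> real" where
  "dirichlet_form T z S f g = (\<Sum>v\<in>S. f v * (real (deg T v) * g v - z * (\<Sum>u\<in>nbrs T v. g u)))"

definition nbhd_supported :: "nat list set \<Rightarrow> nat list set \<Rightarrow> (nat list \<Rightarrow> real) \<Rightarrow> bool" where
  "nbhd_supported T S f \<longleftrightarrow> (\<forall>v. f v \<noteq> 0 \<longrightarrow> v \<in> S \<and> nbrs T v \<subseteq> S)"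

definition deg_mass :: "nat list set \<Rightarrow> nat list set \<Rightarrow> (nat list \<Rightarrow> real) \<Rightarrow> real" where
  "deg_mass T S f = (\<Sum>v\<in>S. real (deg T v) * (f v)\<^sup>2)"

definition grad_energy :: "nat list set \<Rightarrow> nat list set \<Rightarrow> (nat list \<Rightarrow> real) \<Rightarrow> real" where
  "grad_energy T S f = (\<Sum>v\<in>S. \<Sum>u\<in>nbrs T v. (f u - f v)\<^sup>2)"

lemma deg_mass_nonneg: "deg_mass T S f \<ge> 0"
  unfolding deg_mass_def by (auto intro!: sum_nonneg)

lemma grad_energy_nonneg: "grad_energy T S f \<ge> 0"
  unfolding grad_energy_def by (auto intro!: sum_nonneg)

lemma green_partial_nonneg: "z \<ge> 0 \<Longrightarrow> green_partial T z N v \<ge> 0"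
  unfolding green_partial_def using walk_prob_nonneg by (auto intro!: sum_nonneg)

lemma green_density_nonneg: "z \<ge> 0 \<Longrightarrow> green_density T z N v \<ge> 0"
  unfolding green_density_def using green_partial_nonneg by simp

lemma green_density_support:
  assumes "planar_tree T" "green_density T z N v \<noteq> 0"
  shows "v \<in> T \<and> length v \<le> N"
proof -
  have "green_partial T z N v \<noteq> 0"
    using assms(2) unfolding green_density_def by auto
  then obtain t where "t \<le> N" "walk_prob T t v * z ^ t \<noteq> 0"
    unfolding green_partial_def by (metis (no_types, lifting) atMost_iff sum.neutral)
  then show ?thesis using walk_prob_support[OF assms(1), of t v] by auto
qed

lemma deg_mult_green_density:
  assumes "Gamma T"
  shows "real (deg T v) * green_density T z N v = green_partial T z N v"
proof (cases "v \<in> T")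
  case False
  then have "green_partial T z N v = 0"
    unfolding green_partial_def using walk_prob_support[OF Gamma_planar_tree[OF assms]]
    by (intro sum.neutral) auto
  then show ?thesis unfolding green_density_def by simp
qed (use deg_pos[OF assms] in \<open>simp add: green_density_def\<close>)

lemma green_density_root: "Gamma T \<Longrightarrow> green_density T z N [] = (\<Sum>t<Suc N. walk_prob T t [] * z ^ t)"
  unfolding green_density_def green_partial_def by (simp add: deg_root lessThan_Suc_atMost)

lemma green_density_root_ge_1:
  assumes "Gamma T" "0 \<le> z"
  shows "green_density T z N [] \<ge> 1"
proof -
  have "walk_prob T 0 [] * z ^ 0 \<le> (\<Sum>t<Suc N. walk_prob T t [] * z ^ t)"
    by (rule member_le_sum) (auto intro!: mult_nonneg_nonneg walk_prob_nonneg zero_le_power assms(2))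
  then show ?thesis using green_density_root[OF assms(1)] by simp
qed

text \<open>One step of the walk turns \<open>(D - z A)\<close> applied to the density into a telescoping sum.\<close>
lemma green_density_equation:
  assumes "Gamma T"
  shows "real (deg T v) * green_density T z N v - z * (\<Sum>u\<in>nbrs T v. green_density T z N u)
     = (if v = [] then 1 else 0) - z ^ Suc N * walk_prob T (Suc N) v"
proof -
  have "(\<Sum>u\<in>nbrs T v. green_density T z N u)
      = (\<Sum>u\<in>nbrs T v. \<Sum>t\<le>N. walk_prob T t u * z ^ t / real (deg T u))"
    unfolding green_density_def green_partial_def by (simp add: sum_divide_distrib)
  also have "\<dots> = (\<Sum>t\<le>N. \<Sum>u\<in>nbrs T v. walk_prob T t u * z ^ t / real (deg T u))"
    by (rule sum.swap)
  also have "\<dots> = (\<Sum>t\<le>N. z ^ t * walk_prob T (Suc t) v)"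
    by (simp add: deg_def sum_distrib_left mult.commute)
  finally have step: "z * (\<Sum>u\<in>nbrs T v. green_density T z N u)
      = (\<Sum>t\<le>N. walk_prob T (Suc t) v * z ^ Suc t)"
    by (simp add: sum_distrib_left mult.commute mult.left_commute)
  have "real (deg T v) * green_density T z N v - z * (\<Sum>u\<in>nbrs T v. green_density T z N u)
     = (\<Sum>t<Suc N. walk_prob T t v * z ^ t - walk_prob T (Suc t) v * z ^ Suc t)"
    unfolding deg_mult_green_density[OF assms] green_partial_def step
    by (simp add: lessThan_Suc_atMost sum_subtractf)
  also have "\<dots> = walk_prob T 0 v * z ^ 0 - walk_prob T (Suc N) v * z ^ Suc N"
    by (rule sum_lessThan_telescope')
  finally show ?thesis by simp
qed

lemma sum_nbrs_restrict:
  assumes "nbhd_supported T S f"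
  shows "(\<Sum>v\<in>S. f v * (\<Sum>u\<in>nbrs T v. G v u))
       = (\<Sum>v\<in>S. \<Sum>u\<in>{u\<in>S. u \<in> nbrs T v}. f v * G v u)"
proof (rule sum.cong[OF refl])
  fix v
  show "f v * (\<Sum>u\<in>nbrs T v. G v u) = (\<Sum>u\<in>{u\<in>S. u \<in> nbrs T v}. f v * G v u)"
  proof (cases "f v = 0")
    case False
    then have "{u\<in>S. u \<in> nbrs T v} = nbrs T v" using assms unfolding nbhd_supported_def by blast
    then show ?thesis by (simp add: sum_distrib_left)
  qed simp
qed

lemma dirichlet_form_sym:
  assumes "finite S" "nbhd_supported T S f" "nbhd_supported T S g"
  shows "dirichlet_form T z S f g = dirichlet_form T z S g f"
proof -
  have cross: "(\<Sum>v\<in>S. f v * (\<Sum>u\<in>nbrs T v. g u)) = (\<Sum>v\<in>S. g v * (\<Sum>u\<in>nbrs T v. f u))"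
    using sum_nbrs_swap[OF assms(1), of "\<lambda>v u. f v * g u" T]
    unfolding sum_nbrs_restrict[OF assms(2)] sum_nbrs_restrict[OF assms(3)] by (simp add: mult.commute)
  have "dirichlet_form T z S f g
      = (\<Sum>v\<in>S. real (deg T v) * f v * g v) - z * (\<Sum>v\<in>S. f v * (\<Sum>u\<in>nbrs T v. g u))"
       "dirichlet_form T z S g f
      = (\<Sum>v\<in>S. real (deg T v) * f v * g v) - z * (\<Sum>v\<in>S. g v * (\<Sum>u\<in>nbrs T v. f u))"
    unfolding dirichlet_form_def by (simp_all add: algebra_simps sum_subtractf sum_distrib_left)
  then show ?thesis using cross by simp
qed

lemma sum_nbrs_sq:
  assumes "planar_tree T" "finite S" "nbhd_supported T S f"
  shows "(\<Sum>v\<in>S. \<Sum>u\<in>nbrs T v. (f u)\<^sup>2) = deg_mass T S f"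
proof -
  have "(\<Sum>v\<in>S. \<Sum>u\<in>nbrs T v. (f u)\<^sup>2) = (\<Sum>v\<in>S. \<Sum>u\<in>{u\<in>S. u \<in> nbrs T v}. (f u)\<^sup>2)"
    using assms(3) unfolding nbhd_supported_def
    by (intro sum.cong sum.mono_neutral_right finite_nbrs[OF assms(1)]) auto
  also have "\<dots> = (\<Sum>u\<in>S. \<Sum>v\<in>{v\<in>S. v \<in> nbrs T u}. (f u)\<^sup>2)"
    by (rule sum_nbrs_swap[OF assms(2)])
  also have "\<dots> = deg_mass T S f"
    unfolding deg_mass_def
  proof (rule sum.cong[OF refl])
    fix u
    show "(\<Sum>v\<in>{v\<in>S. v \<in> nbrs T u}. (f u)\<^sup>2) = real (deg T u) * (f u)\<^sup>2"
    proof (cases "f u = 0")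
      case False
      then have "{v\<in>S. v \<in> nbrs T u} = nbrs T u" using assms(3) unfolding nbhd_supported_def by blast
      then show ?thesis by (simp add: deg_def)
    qed simp
  qed
  finally show ?thesis .
qed

lemma dirichlet_form_energy:
  assumes "planar_tree T" "finite S" "nbhd_supported T S f"
  shows "dirichlet_form T z S f f = (1 - z) * deg_mass T S f + z / 2 * grad_energy T S f"
proof -
  define X where "X = (\<Sum>v\<in>S. f v * (\<Sum>u\<in>nbrs T v. f u))"
  have grad: "grad_energy T S f = 2 * deg_mass T S f - 2 * X"
    using sum_nbrs_sq[OF assms] unfolding grad_energy_def deg_mass_def X_def
    by (simp add: power2_diff sum_subtractf sum.distrib sum_distrib_left algebra_simps deg_def)
  have "dirichlet_form T z S f f = deg_mass T S f - z * X"
    unfolding dirichlet_form_def deg_mass_def X_def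
    by (simp add: algebra_simps sum_subtractf sum_distrib_left power2_eq_square)
  then show ?thesis unfolding grad by (simp add: algebra_simps)
qed

lemma deg_mass_le_dirichlet_form:
  assumes "planar_tree T" "finite S" "nbhd_supported T S f" "0 \<le> z" "z \<le> 1"
  shows "(1 - z) * deg_mass T S f \<le> dirichlet_form T z S f f"
  using dirichlet_form_energy[OF assms(1-3)] grad_energy_nonneg[of T S f] assms(4) by simp

lemma grad_energy_le_dirichlet_form:
  assumes "planar_tree T" "finite S" "nbhd_supported T S f" "0 \<le> z" "z \<le> 1"
  shows "z / 2 * grad_energy T S f \<le> dirichlet_form T z S f f"
  using dirichlet_form_energy[OF assms(1-3)] deg_mass_nonneg[of T S f] assms(5) by simp

lemma dirichlet_form_nonneg:
  assumes "planar_tree T" "finite S" "nbhd_supported T S f" "0 \<le> z" "z \<le> 1"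
  shows "dirichlet_form T z S f f \<ge> 0"
  using deg_mass_le_dirichlet_form[OF assms] mult_nonneg_nonneg[OF _ deg_mass_nonneg[of T S f], of "1 - z"]
    assms(5) by linarith

lemma nbhd_supported_mono: "nbhd_supported T S f \<Longrightarrow> S \<subseteq> S' \<Longrightarrow> nbhd_supported T S' f"
  unfolding nbhd_supported_def by blast

lemma nbhd_supported_diff:
  "nbhd_supported T S f \<Longrightarrow> nbhd_supported T S g \<Longrightarrow> nbhd_supported T S (\<lambda>v. g v - c * f v)"
  unfolding nbhd_supported_def by (metis diff_zero mult_zero_right)

lemma dirichlet_form_diff_left:
  "dirichlet_form T z S (\<lambda>v. g v - c * f v) h = dirichlet_form T z S g h - c * dirichlet_form T z S f h"
  unfolding dirichlet_form_def by (simp add: left_diff_distrib sum_subtractf sum_distrib_left mult.assoc)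

lemma dirichlet_form_diff_right:
  "dirichlet_form T z S h (\<lambda>v. g v - c * f v) = dirichlet_form T z S h g - c * dirichlet_form T z S h f"
proof -
  have "dirichlet_form T z S h (\<lambda>v. g v - c * f v)
      = (\<Sum>v\<in>S. h v * (real (deg T v) * g v - z * (\<Sum>u\<in>nbrs T v. g u))
          - c * (h v * (real (deg T v) * f v - z * (\<Sum>u\<in>nbrs T v. f u))))"
    unfolding dirichlet_form_def by (rule sum.cong) (auto simp: sum_subtractf sum_distrib_left algebra_simps)
  then show ?thesis unfolding dirichlet_form_def by (simp add: sum_subtractf sum_distrib_left)
qed

lemma dirichlet_form_Cauchy_Schwarz:
  assumes "planar_tree T" "finite S" "nbhd_supported T S f" "nbhd_supported T S g"
    and "0 \<le> z" "z \<le> 1" "dirichlet_form T z S f f > 0"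
  shows "(dirichlet_form T z S f g)\<^sup>2 \<le> dirichlet_form T z S f f * dirichlet_form T z S g g"
proof -
  define c where "c = dirichlet_form T z S f g / dirichlet_form T z S f f"
  have "0 \<le> dirichlet_form T z S (\<lambda>v. g v - c * f v) (\<lambda>v. g v - c * f v)"
    using dirichlet_form_nonneg[OF assms(1,2) nbhd_supported_diff[OF assms(3,4)] assms(5,6)] .
  also have "\<dots> = dirichlet_form T z S g g - 2 * c * dirichlet_form T z S f g
                      + c * c * dirichlet_form T z S f f"
    unfolding dirichlet_form_diff_left dirichlet_form_diff_right
    using dirichlet_form_sym[OF assms(2-4), of z] by (simp add: algebra_simps)
  also have "\<dots> = dirichlet_form T z S g g - (dirichlet_form T z S f g)\<^sup>2 / dirichlet_form T z S f f"
    using assms(7) unfolding c_def by (simp add: field_simps power2_eq_square)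
  finally show ?thesis using assms(7) by (simp add: pos_divide_le_eq mult.commute)
qed

lemma nbhd_supported_green_density:
  assumes "planar_tree T" "N < M"
  shows "nbhd_supported T (ball_verts T M) (green_density T z N)"
  unfolding nbhd_supported_def
proof (intro allI impI)
  fix v assume "green_density T z N v \<noteq> 0"
  then have "v \<in> T" "length v \<le> N" using green_density_support[OF assms(1)] by auto
  then show "v \<in> ball_verts T M \<and> nbrs T v \<subseteq> ball_verts T M"
    using assms(2) unfolding ball_verts_def nbrs_def by auto
qed

lemma dirichlet_form_green_density:
  assumes "Gamma T" "finite S" "[] \<in> S"
  shows "dirichlet_form T z S f (green_density T z N)
       = f [] - z ^ Suc N * (\<Sum>v\<in>S. f v * walk_prob T (Suc N) v)"
proof -
  have "dirichlet_form T z S f (green_density T z N)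
      = (\<Sum>v\<in>S. (if v = [] then f v else 0) - z ^ Suc N * (f v * walk_prob T (Suc N) v))"
    unfolding dirichlet_form_def green_density_equation[OF assms(1)]
    by (rule sum.cong) (auto simp: algebra_simps simp del: walk_prob.simps)
  then show ?thesis using assms(2,3) by (simp add: sum_subtractf sum.delta' sum_distrib_left)
qed

lemma dirichlet_form_green_density_le:
  assumes "Gamma T" "0 \<le> z" "finite S" "[] \<in> S"
  shows "dirichlet_form T z S (green_density T z N) (green_density T z N) \<le> green_density T z N []"
proof -
  have "(\<Sum>v\<in>S. green_density T z N v * walk_prob T (Suc N) v) \<ge> 0"
    by (intro sum_nonneg mult_nonneg_nonneg green_density_nonneg walk_prob_nonneg assms(2))
  then show ?thesis
    using dirichlet_form_green_density[OF assms(1,3,4)] assms(2) by (simp add: mult_nonneg_nonneg)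
qed

section \<open>The return generating function is bounded by the volume of balls\<close>

lemma sq_diff_root_le_path_energy:
  assumes "planar_tree T" "finite S" "v \<in> T" "\<And>j. j < length v \<Longrightarrow> take j v \<in> S"
  shows "(f v - f [])\<^sup>2 \<le> real (length v) * grad_energy T S f"
proof -
  define k where "k = length v"
  define d where "d j = f (take (Suc j) v) - f (take j v)" for j
  define G where "G w = (\<Sum>u\<in>nbrs T w. (f u - f w)\<^sup>2)" for w
  have tel: "(\<Sum>j<k. d j) = f v - f []"
    unfolding d_def k_def using sum_lessThan_telescope[of "\<lambda>j. f (take j v)" "length v"] by simp
  have cs: "(\<Sum>j<k. d j)\<^sup>2 \<le> (\<Sum>j<k. (d j)\<^sup>2) * real k"
    using sum_squared_le_sum_of_squares[of d "{..<k}"] by simp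
  have "(\<Sum>j<k. (d j)\<^sup>2) \<le> (\<Sum>j<k. G (take j v))"
  proof (rule sum_mono)
    fix j assume "j \<in> {..<k}"
    then have ts: "take (Suc j) v = take j v @ [v ! j]"
      unfolding k_def by (intro take_Suc_conv_app_nth) simp
    have "take (Suc j) v \<in> T"
      using planar_tree_prefix[OF assms(1), of "take (Suc j) v" "drop (Suc j) v"] assms(3) by simp
    then have "take (Suc j) v \<in> nbrs T (take j v)"
      using ts planar_tree_prefix[OF assms(1), of "take j v" "[v ! j]"] unfolding nbrs_def by auto
    then show "(d j)\<^sup>2 \<le> G (take j v)"
      unfolding G_def d_def by (intro member_le_sum) (auto simp: finite_nbrs[OF assms(1)])
  qed
  also have "\<dots> = (\<Sum>w\<in>(\<lambda>j. take j v) ` {..<k}. G w)"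
  proof -
    have "inj_on (\<lambda>j. take j v) {..<k}"
    proof (rule inj_onI)
      fix i j assume ij: "i \<in> {..<k}" "j \<in> {..<k}" "take i v = take j v"
      then have "length (take i v) = length (take j v)" by simp
      then show "i = j" using ij(1,2) unfolding k_def by simp
    qed
    then show ?thesis by (simp add: sum.reindex)
  qed
  also have "\<dots> \<le> grad_energy T S f"
    unfolding grad_energy_def G_def
    by (rule sum_mono2[OF assms(2)]) (auto simp: k_def intro!: assms(4) sum_nonneg)
  finally have "(\<Sum>j<k. (d j)\<^sup>2) * real k \<le> grad_energy T S f * real k"
    by (simp add: mult_right_mono)
  then show ?thesis using cs tel unfolding k_def by (simp add: mult.commute)
qed

lemma card_le_deg_mass:
  assumes "Gamma T" "finite S" "V \<subseteq> S" "V \<subseteq> T" "0 \<le> c" "\<And>v. v \<in> V \<Longrightarrow> c \<le> \<bar>f v\<bar>"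
  shows "real (card V) * c\<^sup>2 \<le> deg_mass T S f"
proof -
  have "real (card V) * c\<^sup>2 \<le> (\<Sum>v\<in>V. real (deg T v) * (f v)\<^sup>2)"
    unfolding sum_constant[symmetric]
  proof (rule sum_mono)
    fix v assume v: "v \<in> V"
    have "c\<^sup>2 \<le> (f v)\<^sup>2" using power_mono[OF assms(6)[OF v] assms(5), of 2] by simp
    moreover have "v \<in> T" using v assms(4) by blast
    then have "1 \<le> real (deg T v)" using deg_pos[OF assms(1)] by (simp add: Suc_le_eq)
    ultimately show "c\<^sup>2 \<le> real (deg T v) * (f v)\<^sup>2"
      using mult_mono[of 1 "real (deg T v)" "c\<^sup>2" "(f v)\<^sup>2"] by simp
  qed
  also have "\<dots> \<le> deg_mass T S f"
    unfolding deg_mass_def by (rule sum_mono2[OF assms(2,3)]) simp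
  finally show ?thesis .
qed

lemma root_le_of_large_on_set:
  assumes G: "Gamma T" and fS: "finite S" and supp: "nbhd_supported T S f" and z: "0 \<le> z" "z < 1"
    and E: "dirichlet_form T z S f f \<le> f []" and a1: "1 \<le> f []"
    and V: "V \<subseteq> S" "V \<subseteq> T" "V \<noteq> {}" and large: "\<And>v. v \<in> V \<Longrightarrow> f [] / 2 \<le> f v"
  shows "f [] \<le> 4 / ((1 - z) * real (card V))"
proof -
  have pt: "planar_tree T" using Gamma_planar_tree[OF G] .
  have card_pos: "0 < real (card V)" using finite_subset[OF V(1) fS] V(3) by (simp add: card_gt_0_iff)
  have "real (card V) * (f [] / 2)\<^sup>2 \<le> deg_mass T S f"
    using large a1 by (intro card_le_deg_mass[OF G fS V(1,2)]) fastforce+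
  then have "(1 - z) * (real (card V) * (f [] / 2)\<^sup>2) \<le> f []"
    using deg_mass_le_dirichlet_form[OF pt fS supp] z E by (smt (verit) mult_left_mono)
  then have "((1 - z) * real (card V)) * f [] * f [] \<le> 4 * f []"
    by (simp add: power2_eq_square field_simps)
  then have "((1 - z) * real (card V)) * f [] \<le> 4"
    using a1 by (simp add: mult.commute mult.left_commute)
  then show ?thesis using z card_pos by (simp add: field_simps)
qed

lemma root_le_of_small_at:
  assumes pt: "planar_tree T" and fS: "finite S" and supp: "nbhd_supported T S f" and z: "0 < z" "z \<le> 1"
    and E: "dirichlet_form T z S f f \<le> f []" and a1: "1 \<le> f []"
    and v: "v \<in> T" "\<And>j. j < length v \<Longrightarrow> take j v \<in> S" and small: "f v < f [] / 2"
  shows "f [] \<le> 8 * real (length v) / z"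
proof -
  have "(f [] / 2)\<^sup>2 \<le> (f [] - f v)\<^sup>2" using small a1 by (intro power_mono) auto
  also have "\<dots> = (f v - f [])\<^sup>2" by (rule power2_commute)
  also have "\<dots> \<le> real (length v) * grad_energy T S f" by (rule sq_diff_root_le_path_energy[OF pt fS v])
  finally have "z * (f [] / 2)\<^sup>2 \<le> real (length v) * (2 * (z / 2 * grad_energy T S f))"
    using z by (simp add: mult_left_mono)
  also have "\<dots> \<le> real (length v) * (2 * f [])"
    using grad_energy_le_dirichlet_form[OF pt fS supp, of z] z E by (intro mult_left_mono) auto
  finally have "z * f [] \<le> 8 * real (length v)" using a1 by (simp add: power2_eq_square field_simps)
  then show ?thesis using z by (simp add: field_simps)
qed

text \<open>Either the density stays above half its root value on the whole ball, which costs mass,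
  or it halves along a path of length at most R, which costs gradient energy.\<close>
lemma green_density_root_le_ball:
  assumes G: "Gamma T" and z: "0 < z" "z < 1"
  shows "green_density T z N [] \<le> max (8 * real R / z) (4 / ((1 - z) * real (card (ball_verts T R))))"
proof -
  have pt: "planar_tree T" using Gamma_planar_tree[OF G] .
  define S where "S = ball_verts T (N + R + 1)"
  define h where "h = green_density T z N"
  have fS: "finite S" unfolding S_def by (rule finite_ball_verts[OF pt])
  have supp: "nbhd_supported T S h" unfolding S_def h_def by (rule nbhd_supported_green_density[OF pt]) simp
  have a1: "1 \<le> h []" unfolding h_def using green_density_root_ge_1[OF G] z by simp
  have E: "dirichlet_form T z S h h \<le> h []" unfolding h_def
    by (rule dirichlet_form_green_density_le[OF G _ fS]) (use z root_in_ball_verts[OF pt] in \<open>auto simp: S_def\<close>)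
  have ball_sub: "ball_verts T R \<subseteq> S" unfolding S_def ball_verts_def by auto
  show ?thesis
  proof (cases "\<forall>v\<in>ball_verts T R. h [] / 2 \<le> h v")
    case True
    have "h [] \<le> 4 / ((1 - z) * real (card (ball_verts T R)))"
      by (rule root_le_of_large_on_set[OF G fS supp _ _ E a1 ball_sub])
        (use True z root_in_ball_verts[OF pt] in \<open>auto simp: ball_verts_def\<close>)
    then show ?thesis unfolding h_def by simp
  next
    case False
    then obtain v where v: "v \<in> T" "length v \<le> R" "h v < h [] / 2" unfolding ball_verts_def by auto
    have "h [] \<le> 8 * real (length v) / z"
    proof (rule root_le_of_small_at[OF pt fS supp _ _ E a1 v(1) _ v(3)])
      fix j assume "j < length v"
      then show "take j v \<in> S"
        using planar_tree_prefix[OF pt, of "take j v" "drop j v"] v ball_sub unfolding ball_verts_def by auto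
    qed (use z in auto)
    also have "\<dots> \<le> 8 * real R / z" using v(2) z by (simp add: divide_right_mono)
    finally show ?thesis unfolding h_def by simp
  qed
qed

lemma powr_half_eq_sqrt_power:
  assumes "0 < (y::real)"
  shows "y powr (real t / 2) = sqrt y ^ t"
proof -
  have "y powr (real t / 2) = (y powr (1/2)) powr real t" by (simp add: powr_powr)
  also have "\<dots> = sqrt y ^ t" using assms by (simp add: powr_half_sqrt powr_realpow)
  finally show ?thesis .
qed

lemma Q_gen_sums:
  assumes "Gamma T" "0 < x" "x < 1"
  shows "(\<lambda>t. walk_prob T t [] * sqrt (1 - x) ^ t) sums Q_gen T x"
proof -
  have "summable (\<lambda>t. walk_prob T t [] * sqrt (1 - x) ^ t)"
  proof (rule summable_comparison_test'[of "\<lambda>t. sqrt (1 - x) ^ t"])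
    show "summable (\<lambda>t. sqrt (1 - x) ^ t)" using assms(2,3) by (simp add: summable_geometric)
    show "norm (walk_prob T t [] * sqrt (1 - x) ^ t) \<le> sqrt (1 - x) ^ t" for t
      using walk_prob_le_1[OF assms(1)] walk_prob_nonneg[of T t "[]"] assms(3)
      by (simp add: abs_mult mult_left_le_one_le)
  qed
  then show ?thesis
    unfolding Q_gen_def using assms(3) by (simp add: powr_half_eq_sqrt_power summable_sums)
qed

lemma green_density_root_le_Q_gen:
  assumes "Gamma T" "0 < x" "x < 1"
  shows "green_density T (sqrt (1 - x)) N [] \<le> Q_gen T x"
  unfolding green_density_root[OF assms(1)] sums_unique[OF Q_gen_sums[OF assms]]
  using sums_summable[OF Q_gen_sums[OF assms]]
  by (rule sum_le_suminf) (use assms(3) in \<open>auto intro!: mult_nonneg_nonneg walk_prob_nonneg zero_le_power\<close>)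

lemma Q_gen_le_green_density_bound:
  assumes "Gamma T" "0 < x" "x < 1" "\<And>N. green_density T (sqrt (1 - x)) N [] \<le> B"
  shows "Q_gen T x \<le> B"
proof -
  have "(\<Sum>t<n. walk_prob T t [] * sqrt (1 - x) ^ t) \<le> B" for n
  proof (cases n)
    case 0
    then show ?thesis using assms(3) assms(4)[of 0] green_density_root_ge_1[OF assms(1), of "sqrt (1 - x)" 0] by simp
  qed (use assms(4) green_density_root[OF assms(1)] in simp)
  then show ?thesis
    unfolding sums_unique[OF Q_gen_sums[OF assms(1-3)]]
    by (rule suminf_le_const[OF sums_summable[OF Q_gen_sums[OF assms(1-3)]]])
qed

lemma ball_size_le_card_ball_verts:
  assumes "planar_tree T"
  shows "ball_size T R \<le> card (ball_verts T R)"
  unfolding ball_size_def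
proof (rule card_inj_on_le[of snd])
  show "inj_on snd (ball_edges T R)" unfolding ball_edges_def by (rule inj_onI) auto
  show "snd ` ball_edges T R \<subseteq> ball_verts T R" unfolding ball_edges_def ball_verts_def by auto
qed (rule finite_ball_verts[OF assms])

lemma one_le_ball_size:
  assumes "Gamma T" "R \<ge> 1"
  shows "ball_size T R \<ge> 1"
proof -
  have pt: "planar_tree T" using Gamma_planar_tree[OF assms(1)] .
  have "ball_edges T R \<subseteq> ball_verts T R \<times> ball_verts T R"
    unfolding ball_edges_def ball_verts_def by auto
  then have "finite (ball_edges T R)" using finite_ball_verts[OF pt] by (meson finite_SigmaI finite_subset)
  moreover have "([], [0]) \<in> ball_edges T R"
    using assms planar_tree_root[OF pt] unfolding ball_edges_def Gamma_def by auto
  ultimately show ?thesis unfolding ball_size_def by (metis Suc_leI card_gt_0_iff empty_iff One_nat_def)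
qed

lemma Q_gen_le_ball_size:
  assumes "Gamma T" "0 < x" "x \<le> 3/4" "R \<ge> 1"
  shows "Q_gen T x \<le> max (16 * real R) (8 / (x * real (ball_size T R)))"
proof (rule Q_gen_le_green_density_bound[OF assms(1,2)])
  define z where "z = sqrt (1 - x)"
  have z: "1/2 \<le> z" "z < 1" unfolding z_def using assms(2,3) real_le_rsqrt[of "1/2" "1 - x"]
    by (auto simp: power2_eq_square)
  have "x = (1 - z) * (1 + z)" unfolding z_def using assms(3) by (simp add: algebra_simps)
  also have "\<dots> \<le> (1 - z) * 2" using z by (intro mult_left_mono) auto
  finally have x_le: "x \<le> 2 * (1 - z)" by simp
  have size: "1 \<le> real (ball_size T R)" "real (ball_size T R) \<le> real (card (ball_verts T R))"
    using one_le_ball_size[OF assms(1,4)] ball_size_le_card_ball_verts[OF Gamma_planar_tree[OF assms(1)]]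
    by auto
  fix N
  have "green_density T z N [] \<le> max (8 * real R / z) (4 / ((1 - z) * real (card (ball_verts T R))))"
    using green_density_root_le_ball[OF assms(1)] z by simp
  also have "\<dots> \<le> max (16 * real R) (8 / (x * real (ball_size T R)))"
  proof (rule max.mono)
    have "real R * 1 \<le> real R * (2 * z)" using z by (intro mult_left_mono) auto
    then show "8 * real R / z \<le> 16 * real R" using z by (simp add: field_simps)
    have "x * real (ball_size T R) \<le> (2 * (1 - z)) * real (card (ball_verts T R))"
      using x_le size assms(2) z(2) by (intro mult_mono) auto
    then show "4 / ((1 - z) * real (card (ball_verts T R))) \<le> 8 / (x * real (ball_size T R))"
      using assms(2) size z(2) by (simp add: field_simps)
  qed
  finally show "green_density T (sqrt (1 - x)) N [] \<le> max (16 * real R) (8 / (x * real (ball_size T R)))"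
    unfolding z_def .
qed (use assms in simp)

section \<open>The spine and the hull\<close>

definition spine_desc :: "nat list set \<Rightarrow> nat \<Rightarrow> nat list \<Rightarrow> bool" where
  "spine_desc T k v \<longleftrightarrow> (\<exists>w. v = spine T k @ w)"

lemma spine_ray:
  assumes "Gamma_S_inf T"
  shows "ray T (spine T)"
proof -
  have "\<exists>!f. ray T f" using assms unfolding Gamma_S_inf_def by blast
  then show ?thesis unfolding spine_def by (rule theI')
qed

lemma ray_eq_spine: "Gamma_S_inf T \<Longrightarrow> ray T f \<Longrightarrow> f = spine T"
  using spine_ray unfolding Gamma_S_inf_def by blast

lemma spine_0: "Gamma_S_inf T \<Longrightarrow> spine T 0 = []"
  using spine_ray unfolding ray_def by blast

lemma spine_Suc:
  "Gamma_S_inf T \<Longrightarrow> spine T (Suc k) \<in> T \<and> (\<exists>i. spine T (Suc k) = spine T k @ [i])"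
  using spine_ray unfolding ray_def by blast

lemma length_spine:
  assumes "Gamma_S_inf T"
  shows "length (spine T k) = k"
proof (induction k)
  case (Suc k)
  obtain i where "spine T (Suc k) = spine T k @ [i]" using spine_Suc[OF assms] by blast
  then show ?case using Suc by simp
qed (simp add: spine_0[OF assms])

lemma spine_in_tree:
  assumes "Gamma_S_inf T"
  shows "spine T k \<in> T"
proof (cases k)
  case 0
  then show ?thesis
    using spine_0[OF assms] planar_tree_root[OF Gamma_planar_tree[OF Gamma_S_inf_Gamma[OF assms]]] by simp
qed (use spine_Suc[OF assms] in blast)

lemma spine_butlast: "Gamma_S_inf T \<Longrightarrow> butlast (spine T (Suc k)) = spine T k"
  using spine_Suc[of T k] by auto

lemma spine_1:
  assumes "Gamma_S_inf T"
  shows "spine T 1 = [0]"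
proof -
  obtain i where i: "spine T 1 = [i]" using spine_Suc[OF assms, of 0] spine_0[OF assms] by auto
  then have "[i] \<in> T" using spine_in_tree[OF assms, of 1] by simp
  then show ?thesis using i Gamma_root_child[OF Gamma_S_inf_Gamma[OF assms]] by simp
qed

lemma spine_prefix:
  assumes "Gamma_S_inf T" "j \<le> k"
  shows "\<exists>w. spine T k = spine T j @ w"
  using assms(2)
proof (induction k)
  case (Suc k)
  show ?case
  proof (cases "j = Suc k")
    case False
    then obtain w where "spine T k = spine T j @ w" using Suc by fastforce
    moreover obtain i where "spine T (Suc k) = spine T k @ [i]" using spine_Suc[OF assms(1)] by blast
    ultimately show ?thesis by auto
  qed simp
qed simp

lemma spine_desc_mono:
  assumes "Gamma_S_inf T" "spine_desc T k v" "j \<le> k"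
  shows "spine_desc T j v"
proof -
  obtain w' where "spine T k = spine T j @ w'" using spine_prefix[OF assms(1,3)] by blast
  moreover obtain w where "v = spine T k @ w" using assms(2) unfolding spine_desc_def by blast
  ultimately have "v = spine T j @ (w' @ w)" by simp
  then show ?thesis unfolding spine_desc_def by blast
qed

lemma spine_desc_append: "spine_desc T k v \<Longrightarrow> spine_desc T k (v @ w)"
  unfolding spine_desc_def by auto

lemma spine_desc_length: "Gamma_S_inf T \<Longrightarrow> spine_desc T k v \<Longrightarrow> k \<le> length v"
  unfolding spine_desc_def using length_spine by fastforce

lemma spine_desc_spine: "spine_desc T k (spine T k)"
  unfolding spine_desc_def by auto

lemma spine_desc_snoc: "spine_desc T k (v @ [j]) \<longleftrightarrow> spine_desc T k v \<or> spine T k = v @ [j]"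
  unfolding spine_desc_def
proof
  assume "\<exists>w. v @ [j] = spine T k @ w"
  then obtain w where w: "v @ [j] = spine T k @ w" by blast
  show "(\<exists>w. v = spine T k @ w) \<or> spine T k = v @ [j]"
  proof (cases w rule: rev_cases)
    case (snoc w' x)
    then have "v = spine T k @ w'" using w by simp
    then show ?thesis by blast
  qed (use w in simp)
qed auto

lemma spine_desc_1:
  assumes "Gamma_S_inf T" "v \<in> T" "v \<noteq> []"
  shows "spine_desc T 1 v"
proof -
  obtain a w where v: "v = a # w" using assms(3) by (cases v) auto
  then have "[a] \<in> T"
    using planar_tree_prefix[OF Gamma_planar_tree[OF Gamma_S_inf_Gamma[OF assms(1)]], of "[a]" w] assms(2) by simp
  then have "a = 0" using Gamma_root_child Gamma_S_inf_Gamma[OF assms(1)] by blast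
  then show ?thesis unfolding spine_desc_def using spine_1[OF assms(1)] v by simp
qed

lemma infinite_subtree_child:
  assumes pt: "planar_tree T" and UT: "U \<subseteq> T" and closed: "\<And>u w. u @ w \<in> U \<Longrightarrow> u \<in> U"
    and inf: "infinite {w \<in> U. \<exists>x. w = v @ x}"
  shows "\<exists>i. v @ [i] \<in> U \<and> infinite {w \<in> U. \<exists>x. w = (v @ [i]) @ x}"
proof (rule ccontr)
  define D where "D u = {w \<in> U. \<exists>x. w = u @ x}" for u
  assume none: "\<not> (\<exists>i. v @ [i] \<in> U \<and> infinite {w \<in> U. \<exists>x. w = (v @ [i]) @ x})"
  obtain w where "w \<in> D v" using inf unfolding D_def by (metis finite.emptyI ex_in_conv)
  then obtain x where "v @ x \<in> U" unfolding D_def by blast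
  then have vT: "v \<in> T" using UT planar_tree_prefix[OF pt] by blast
  have "D v \<subseteq> insert v (\<Union>i\<in>{i. v @ [i] \<in> T}. D (v @ [i]))"
  proof
    fix w assume "w \<in> D v"
    then obtain x where x: "w = v @ x" "w \<in> U" unfolding D_def by blast
    show "w \<in> insert v (\<Union>i\<in>{i. v @ [i] \<in> T}. D (v @ [i]))"
    proof (cases x)
      case (Cons i x')
      then have w: "w = (v @ [i]) @ x'" using x by simp
      then have "v @ [i] \<in> U" using closed x by metis
      then show ?thesis using w x UT unfolding D_def by blast
    qed (use x in simp)
  qed
  moreover have "finite (D (v @ [i]))" for i
  proof (cases "v @ [i] \<in> U")
    case False
    then have "D (v @ [i]) = {}" unfolding D_def using closed by blast
    then show ?thesis by simp
  qed (use none in \<open>auto simp: D_def\<close>)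
  ultimately have "finite (D v)"
    using planar_tree_finite_children[OF pt vT] by (meson finite_UN_I finite_insert finite_subset)
  then show False using inf unfolding D_def by simp
qed

lemma koenig_ray:
  assumes pt: "planar_tree T" and UT: "U \<subseteq> T" and closed: "\<And>v w. v @ w \<in> U \<Longrightarrow> v \<in> U"
    and inf: "infinite U"
  shows "\<exists>f. ray T f \<and> (\<forall>k. f k \<in> U)"
proof -
  define D where "D v = {w \<in> U. \<exists>x. w = v @ x}" for v
  define next_vertex where
    "next_vertex u = (SOME u'. (\<exists>i. u' = u @ [i]) \<and> u' \<in> U \<and> infinite (D u'))" for u
  have next_vertex: "(\<exists>i. next_vertex u = u @ [i]) \<and> next_vertex u \<in> U \<and> infinite (D (next_vertex u))"
    if iu: "infinite (D u)" for u
  proof -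
    have "\<exists>i. u @ [i] \<in> U \<and> infinite {w \<in> U. \<exists>x. w = (u @ [i]) @ x}"
      by (rule infinite_subtree_child[OF pt UT]) (use closed iu in \<open>auto simp: D_def\<close>)
    then obtain i where "u @ [i] \<in> U \<and> infinite (D (u @ [i]))" unfolding D_def by blast
    then have "\<exists>u'. (\<exists>i. u' = u @ [i]) \<and> u' \<in> U \<and> infinite (D u')" by blast
    then show ?thesis unfolding next_vertex_def by (rule someI_ex)
  qed
  define f where "f = rec_nat [] (\<lambda>_. next_vertex)"
  have f0: "f 0 = []" and fSuc: "f (Suc k) = next_vertex (f k)" for k
    unfolding f_def by simp_all
  have D0: "D [] = U" unfolding D_def by simp
  have f_inf: "infinite (D (f k))" for k
    by (induction k) (use inf D0 f0 fSuc next_vertex in auto)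
  have "ray T f"
    unfolding ray_def using f0 fSuc next_vertex[OF f_inf] UT by auto
  moreover have "f k \<in> U" for k
  proof (cases k)
    case 0
    obtain u where "u \<in> U" using inf by (metis finite.emptyI ex_in_conv)
    then show ?thesis using 0 f0 closed[of "[]" u] by simp
  qed (use fSuc next_vertex[OF f_inf] in simp)
  ultimately show ?thesis by blast
qed

text \<open>Everything that does not hang below s_K is finite, since otherwise Koenig's lemma would
  produce a second ray.\<close>
lemma finite_not_spine_desc:
  assumes "Gamma_S_inf T"
  shows "finite {v \<in> T. \<not> spine_desc T K v}"
proof (rule ccontr)
  have pt: "planar_tree T" using Gamma_planar_tree[OF Gamma_S_inf_Gamma[OF assms]] .
  assume "infinite {v \<in> T. \<not> spine_desc T K v}"
  moreover have "v \<in> {v \<in> T. \<not> spine_desc T K v}" if "v @ w \<in> {v \<in> T. \<not> spine_desc T K v}" for v w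
    using that planar_tree_prefix[OF pt] spine_desc_append by blast
  ultimately obtain f where f: "ray T f" "\<forall>k. f k \<in> {v \<in> T. \<not> spine_desc T K v}"
    using koenig_ray[OF pt, of "{v \<in> T. \<not> spine_desc T K v}"] by blast
  then show False using ray_eq_spine[OF assms f(1)] spine_desc_spine[of T K] by auto
qed

definition children :: "nat list set \<Rightarrow> nat list \<Rightarrow> nat list set" where
  "children T v = {u \<in> T. \<exists>i. u = v @ [i]}"

lemma A_verts_eq: "A_verts T i = {v \<in> T. spine_desc T i v \<and> \<not> spine_desc T (Suc i) v}"
  unfolding A_verts_def spine_desc_def by blast

lemma finite_A_verts:
  assumes "Gamma_S_inf T"
  shows "finite (A_verts T i)"
  using finite_not_spine_desc[OF assms, of "Suc i"] unfolding A_verts_eq by (rule rev_finite_subset) blast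

lemma finite_A_edges:
  assumes "Gamma_S_inf T"
  shows "finite (A_edges T i)"
proof -
  have "A_edges T i \<subseteq> A_verts T i \<times> A_verts T i" unfolding A_edges_def by blast
  then show ?thesis using finite_A_verts[OF assms] by (meson finite_SigmaI finite_subset)
qed

text \<open>A^i is a finite tree rooted at s_i: every other vertex is the lower end of its parent edge.\<close>
lemma card_A_verts_le:
  assumes S: "Gamma_S_inf T"
  shows "card (A_verts T i) \<le> card (A_edges T i) + 1"
proof -
  have pt: "planar_tree T" using Gamma_planar_tree[OF Gamma_S_inf_Gamma[OF S]] .
  define B where "B = A_verts T i - {spine T i}"
  have "card B \<le> card (A_edges T i)"
  proof (rule card_inj_on_le[of "\<lambda>v. (butlast v, v)"])
    show "inj_on (\<lambda>v. (butlast v, v)) B" by (rule inj_onI) simp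
    show "(\<lambda>v. (butlast v, v)) ` B \<subseteq> A_edges T i"
    proof
      fix e assume "e \<in> (\<lambda>v. (butlast v, v)) ` B"
      then obtain v where v: "v \<in> B" "e = (butlast v, v)" by blast
      then have vT: "v \<in> T" and npv: "\<not> spine_desc T (Suc i) v" and vne: "v \<noteq> spine T i"
        and "spine_desc T i v"
        unfolding B_def A_verts_eq by auto
      then obtain w where w: "v = spine T i @ w" "w \<noteq> []" unfolding spine_desc_def by auto
      then have "v \<noteq> []" by simp
      then have vb: "v = butlast v @ [last v]" by simp
      have "butlast v \<in> T" using planar_tree_prefix[OF pt, of "butlast v" "[last v]"] vb vT by simp
      moreover have "\<not> spine_desc T (Suc i) (butlast v)" using npv vb spine_desc_append by metis
      moreover have "spine_desc T i (butlast v)" using w unfolding spine_desc_def by (simp add: butlast_append)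
      ultimately have "butlast v \<in> A_verts T i" unfolding A_verts_eq by blast
      moreover have "v \<in> A_verts T i" using v(1) unfolding B_def by blast
      ultimately show "e \<in> A_edges T i" unfolding A_edges_def using v(2) vb by blast
    qed
  qed (rule finite_A_edges[OF S])
  moreover have "card (A_verts T i) \<le> card (insert (spine T i) B)"
    using finite_A_verts[OF S] unfolding B_def by (intro card_mono) auto
  moreover have "finite B" unfolding B_def using finite_A_verts[OF S] by simp
  then have "card (insert (spine T i) B) \<le> card B + 1" by (simp add: card_insert_if)
  ultimately show ?thesis by linarith
qed

lemma not_spine_desc_subset_A_verts:
  assumes S: "Gamma_S_inf T"
  shows "{v \<in> T. \<not> spine_desc T R v} \<subseteq> insert [] (\<Union>i\<in>{1..<R}. A_verts T i)"
proof
  fix v assume v: "v \<in> {v \<in> T. \<not> spine_desc T R v}"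
  show "v \<in> insert [] (\<Union>i\<in>{1..<R}. A_verts T i)"
  proof (cases "v = []")
    case False
    have vT: "v \<in> T" and np: "\<not> spine_desc T R v" using v by auto
    define L where "L = (LEAST k. \<not> spine_desc T k v)"
    have nL: "\<not> spine_desc T L v" unfolding L_def by (rule LeastI[of _ R]) (rule np)
    have LR: "L \<le> R" unfolding L_def by (rule Least_le) (rule np)
    have "\<not> L \<le> 1" using spine_desc_mono[OF S spine_desc_1[OF S vT False]] nL by blast
    then have L2: "L \<ge> 2" by simp
    have "L - 1 < L" using L2 by simp
    then have "spine_desc T (L - 1) v" unfolding L_def using not_less_Least by blast
    then have "v \<in> A_verts T (L - 1)" unfolding A_verts_eq using vT nL L2 by (simp add: Suc_diff_1)
    moreover have "L - 1 \<in> {1..<R}" using L2 LR by auto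
    ultimately show ?thesis by blast
  qed simp
qed

lemma card_not_spine_desc_le_hull_size:
  assumes S: "Gamma_S_inf T" and R: "R \<ge> 1"
  shows "card {v \<in> T. \<not> spine_desc T R v} \<le> hull_size T R"
proof -
  have fU: "finite (\<Union>i\<in>{1..<R}. A_verts T i)" using finite_A_verts[OF S] by blast
  have "card {v \<in> T. \<not> spine_desc T R v} \<le> card (insert [] (\<Union>i\<in>{1..<R}. A_verts T i))"
    by (rule card_mono[OF _ not_spine_desc_subset_A_verts[OF S]]) (use fU in simp)
  also have "\<dots> \<le> card (\<Union>i\<in>{1..<R}. A_verts T i) + 1"
    using fU by (simp add: card_insert_le_m1)
  also have "card (\<Union>i\<in>{1..<R}. A_verts T i) \<le> (\<Sum>i\<in>{1..<R}. card (A_verts T i))"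
    by (rule card_UN_le) simp
  also have "\<dots> \<le> (\<Sum>i\<in>{1..<R}. card (A_edges T i) + 1)"
    by (rule sum_mono) (rule card_A_verts_le[OF S])
  also have "\<dots> = (\<Sum>i\<in>{1..<R}. card (A_edges T i)) + (R - 1)"
    by (simp only: sum.distrib) simp
  also have "(\<Sum>i\<in>{1..<R}. card (A_edges T i)) \<le> (\<Sum>i=1..R. card (A_edges T i))"
    by (rule sum_mono2) auto
  finally show ?thesis unfolding hull_size_def using R by linarith
qed

lemma finite_children:
  assumes "planar_tree T"
  shows "finite (children T v)"
proof (cases "v \<in> T")
  case True
  have "children T v \<subseteq> (\<lambda>i. v @ [i]) ` {i. v @ [i] \<in> T}" unfolding children_def by blast
  then show ?thesis using planar_tree_finite_children[OF assms True] by (meson finite_imageI finite_subset)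
next
  case False
  then have "children T v = {}" unfolding children_def using planar_tree_prefix[OF assms] by blast
  then show ?thesis by simp
qed

lemma deg_le_card_children:
  assumes "planar_tree T"
  shows "deg T v \<le> card (children T v) + 1"
proof -
  have "nbrs T v \<subseteq> insert (butlast v) (children T v)" unfolding nbrs_def children_def by auto
  then have "deg T v \<le> card (insert (butlast v) (children T v))"
    unfolding deg_def using finite_children[OF assms] by (intro card_mono) auto
  also have "\<dots> \<le> card (children T v) + 1"
    using finite_children[OF assms] by (simp add: card_insert_le_m1)
  finally show ?thesis .
qed

text \<open>Each vertex not below s_R has at most one parent and all children except s_R stay in
  that set.\<close>
lemma sum_deg_not_spine_desc_le:
  assumes S: "Gamma_S_inf T" and R: "R \<ge> 1"
  shows "(\<Sum>v\<in>{v \<in> T. \<not> spine_desc T R v}. real (deg T v)) \<le> 2 * real (hull_size T R) + 1"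
proof -
  have pt: "planar_tree T" using Gamma_planar_tree[OF Gamma_S_inf_Gamma[OF S]] .
  define W where "W = {v \<in> T. \<not> spine_desc T R v}"
  have fW: "finite W" unfolding W_def by (rule finite_not_spine_desc[OF S])
  have "(\<Sum>v\<in>W. deg T v) \<le> (\<Sum>v\<in>W. card (children T v) + 1)"
    by (rule sum_mono) (rule deg_le_card_children[OF pt])
  also have "\<dots> = (\<Sum>v\<in>W. card (children T v)) + card W" by (simp only: sum.distrib) simp
  also have "(\<Sum>v\<in>W. card (children T v)) = card (\<Union>v\<in>W. children T v)"
  proof (rule card_UN_disjoint[symmetric])
    show "\<forall>v\<in>W. finite (children T v)" using finite_children[OF pt] by blast
    show "\<forall>v\<in>W. \<forall>v'\<in>W. v \<noteq> v' \<longrightarrow> children T v \<inter> children T v' = {}"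
      unfolding children_def by auto
  qed (rule fW)
  also have "card (\<Union>v\<in>W. children T v) \<le> card (insert (spine T R) W)"
  proof (rule card_mono)
    show "(\<Union>v\<in>W. children T v) \<subseteq> insert (spine T R) W"
    proof
      fix u assume "u \<in> (\<Union>v\<in>W. children T v)"
      then obtain v j where v: "v \<in> W" "u = v @ [j]" "u \<in> T" unfolding children_def by blast
      then show "u \<in> insert (spine T R) W" using spine_desc_snoc[of T R v j] unfolding W_def by auto
    qed
  qed (use fW in simp)
  also have "\<dots> \<le> card W + 1" using fW by (simp add: card_insert_le_m1)
  finally have "(\<Sum>v\<in>W. deg T v) \<le> 2 * card W + 1" by simp
  moreover have "card W \<le> hull_size T R" unfolding W_def by (rule card_not_spine_desc_le_hull_size[OF S R])
  ultimately have "(\<Sum>v\<in>W. deg T v) \<le> 2 * hull_size T R + 1" by linarith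
  then have "real (\<Sum>v\<in>W. deg T v) \<le> real (2 * hull_size T R + 1)" by (simp only: of_nat_le_iff)
  then show ?thesis unfolding W_def by simp
qed

section \<open>The return generating function is bounded below through the volume of hulls\<close>

definition spine_count :: "nat list set \<Rightarrow> nat \<Rightarrow> nat list \<Rightarrow> nat" where
  "spine_count T R v = card {k \<in> {1..R}. spine_desc T k v}"

text \<open>The test function of the lower bound: 1 at the root, dropping by 1/R at each of
  s_1, ..., s_R, constant on the branches A^i, and 0 below s_R.\<close>
definition spine_profile :: "nat list set \<Rightarrow> nat \<Rightarrow> nat list \<Rightarrow> real" where
  "spine_profile T R v = (if v \<in> T then 1 - real (spine_count T R v) / real R else 0)"

definition on_spine :: "nat list set \<Rightarrow> nat \<Rightarrow> nat list \<Rightarrow> bool" where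
  "on_spine T R v \<longleftrightarrow> v = spine T (length v) \<and> length v \<le> R"

lemma spine_count_le: "spine_count T R v \<le> R"
proof -
  have "spine_count T R v \<le> card {1..R}" unfolding spine_count_def by (rule card_mono) auto
  then show ?thesis by simp
qed

lemma spine_profile_range:
  assumes "R \<ge> 1"
  shows "0 \<le> spine_profile T R v" "spine_profile T R v \<le> 1"
  using spine_count_le[of T R v] assms unfolding spine_profile_def by (auto simp: field_simps)

lemma spine_profile_root:
  assumes S: "Gamma_S_inf T"
  shows "spine_profile T R [] = 1"
proof -
  have "{k \<in> {1..R}. spine_desc T k []} = {}" using spine_desc_length[OF S, of _ "[]"] by fastforce
  moreover have "[] \<in> T" using planar_tree_root[OF Gamma_planar_tree[OF Gamma_S_inf_Gamma[OF S]]] .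
  ultimately show ?thesis unfolding spine_profile_def spine_count_def by simp
qed

lemma spine_profile_support:
  assumes S: "Gamma_S_inf T" and R: "R \<ge> 1" and nz: "spine_profile T R v \<noteq> 0"
  shows "v \<in> T \<and> \<not> spine_desc T R v"
proof -
  have vT: "v \<in> T" using nz unfolding spine_profile_def by (auto split: if_splits)
  moreover have "\<not> spine_desc T R v"
  proof
    assume p: "spine_desc T R v"
    have "{k \<in> {1..R}. spine_desc T k v} = {1..R}" using spine_desc_mono[OF S p] by auto
    then have "spine_count T R v = R" unfolding spine_count_def by simp
    then show False using nz vT R unfolding spine_profile_def by simp
  qed
  ultimately show ?thesis by simp
qed

lemma spine_count_snoc:
  assumes S: "Gamma_S_inf T"
  shows "spine_count T R (v @ [j]) = spine_count T R v + (if on_spine T R (v @ [j]) then 1 else 0)"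
proof -
  let ?u = "v @ [j]"
  have e: "{k \<in> {1..R}. spine_desc T k ?u}
      = {k \<in> {1..R}. spine_desc T k v} \<union> {k \<in> {1..R}. spine T k = ?u}"
    using spine_desc_snoc[of T _ v j] by blast
  have d: "{k \<in> {1..R}. spine_desc T k v} \<inter> {k \<in> {1..R}. spine T k = ?u} = {}"
  proof -
    { fix k assume "spine_desc T k v" "spine T k = ?u"
      then have "k \<le> length v" "k = length ?u"
        using spine_desc_length[OF S] length_spine[OF S, of k] by auto
      then have False by simp }
    then show ?thesis by blast
  qed
  have lk: "k = length ?u" if "spine T k = ?u" for k
  proof -
    have "length (spine T k) = k" by (rule length_spine[OF S])
    then show ?thesis using that by simp
  qed
  have s2: "{k \<in> {1..R}. spine T k = ?u} = (if on_spine T R ?u then {length ?u} else {})"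
  proof (cases "on_spine T R ?u")
    case True
    { fix k assume k: "k \<in> {1..R}" "spine T k = ?u"
      then have "k = length ?u" using lk by blast }
    moreover have "length ?u \<in> {1..R}" "spine T (length ?u) = ?u"
      using True unfolding on_spine_def by (auto simp: length_spine[OF S])
    ultimately show ?thesis using True by auto
  next
    case False
    { fix k assume k: "k \<in> {1..R}" "spine T k = ?u"
      then have "k = length ?u" using lk by blast
      then have "on_spine T R ?u" using k unfolding on_spine_def by auto
      then have False using False by simp }
    then show ?thesis using False by auto
  qed
  show ?thesis unfolding spine_count_def e
    by (subst card_Un_disjoint) (use d s2 in auto)
qed

lemma spine_profile_child_diff:
  assumes S: "Gamma_S_inf T" and R: "R \<ge> 1" and T: "v \<in> T" "v @ [j] \<in> T"
  shows "spine_profile T R (v @ [j]) - spine_profile T R v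
       = (if on_spine T R (v @ [j]) then - 1 / real R else 0)"
  using spine_count_snoc[OF S, of R v j] T R unfolding spine_profile_def by (auto simp: field_simps)

lemma spine_profile_nbr_diff_sq:
  assumes S: "Gamma_S_inf T" and R: "R \<ge> 1" and u: "u \<in> nbrs T v"
  shows "(spine_profile T R u - spine_profile T R v)\<^sup>2
       = (if on_spine T R u \<and> on_spine T R v then 1 / (real R)\<^sup>2 else 0)"
proof -
  have edge: "(spine_profile T R (w @ [j]) - spine_profile T R w)\<^sup>2
      = (if on_spine T R (w @ [j]) \<and> on_spine T R w then 1 / (real R)\<^sup>2 else 0)"
    if wT: "w \<in> T" "w @ [j] \<in> T" for w j
  proof -
    have "on_spine T R w" if sp: "on_spine T R (w @ [j])"
    proof -
      have "w @ [j] = spine T (Suc (length w))" using sp unfolding on_spine_def by simp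
      then have "w = spine T (length w)" using spine_butlast[OF S, of "length w"] by (metis butlast_snoc)
      then show ?thesis using sp unfolding on_spine_def by simp
    qed
    then show ?thesis using spine_profile_child_diff[OF S R wT] by (auto simp: power_divide)
  qed
  from u consider (child) j where "u = v @ [j]" "v \<in> T" "u \<in> T"
    | (parent) j where "v = u @ [j]" "v \<in> T" "u \<in> T"
    unfolding nbrs_def by blast
  then show ?thesis
  proof cases
    case child
    then show ?thesis using edge[of v j] by simp
  next
    case parent
    then show ?thesis using edge[of u j] by (simp add: power2_commute conj_commute)
  qed
qed

lemma sum_nbrs_spine_profile_diff_sq:
  assumes S: "Gamma_S_inf T" and R: "R \<ge> 1"
  shows "(\<Sum>u\<in>nbrs T v. (spine_profile T R u - spine_profile T R v)\<^sup>2) \<le> 2 / (real R)\<^sup>2"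
    and "\<not> on_spine T R v \<Longrightarrow> (\<Sum>u\<in>nbrs T v. (spine_profile T R u - spine_profile T R v)\<^sup>2) = 0"
proof -
  have pt: "planar_tree T" using Gamma_planar_tree[OF Gamma_S_inf_Gamma[OF S]] .
  define g where "g u = (spine_profile T R u - spine_profile T R v)\<^sup>2" for u
  have g: "g u = (if on_spine T R u \<and> on_spine T R v then 1 / (real R)\<^sup>2 else 0)" if "u \<in> nbrs T v" for u
    unfolding g_def by (rule spine_profile_nbr_diff_sq[OF S R that])
  define P where "P = nbrs T v \<inter> {spine T (Suc (length v)), spine T (length v - 1)}"
  have "g u = 0" if "u \<in> nbrs T v" "u \<notin> P" for u
  proof (rule ccontr)
    assume "g u \<noteq> 0"
    then have "on_spine T R u" using g[OF that(1)] by (auto split: if_splits)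
    moreover have "length u = Suc (length v) \<or> length v = Suc (length u)"
      using that(1) unfolding nbrs_def by auto
    ultimately have "u \<in> {spine T (Suc (length v)), spine T (length v - 1)}"
      unfolding on_spine_def by (metis diff_Suc_1 insertCI)
    then show False using that by (simp add: P_def)
  qed
  then have "(\<Sum>u\<in>nbrs T v. g u) = (\<Sum>u\<in>P. g u)"
    by (intro sum.mono_neutral_right finite_nbrs[OF pt]) (auto simp: P_def)
  also have "\<dots> \<le> real (card P) * (1 / (real R)\<^sup>2)"
    by (rule sum_bounded_above) (use g in \<open>auto simp: P_def\<close>)
  also have "\<dots> \<le> 2 * (1 / (real R)\<^sup>2)"
  proof -
    have "card P \<le> card {spine T (Suc (length v)), spine T (length v - 1)}"
      unfolding P_def by (rule card_mono) auto
    also have "\<dots> \<le> 2" by (simp add: card_insert_if)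
    finally show ?thesis by (intro mult_right_mono) auto
  qed
  finally show "(\<Sum>u\<in>nbrs T v. (spine_profile T R u - spine_profile T R v)\<^sup>2) \<le> 2 / (real R)\<^sup>2"
    unfolding g_def by simp
  show "(\<Sum>u\<in>nbrs T v. (spine_profile T R u - spine_profile T R v)\<^sup>2) = 0" if "\<not> on_spine T R v"
    using g that unfolding g_def by (intro sum.neutral) auto
qed

lemma nbhd_supported_spine_profile:
  assumes S: "Gamma_S_inf T" and R: "R \<ge> 1" and sub: "{v \<in> T. \<not> spine_desc T (Suc R) v} \<subseteq> S'"
  shows "nbhd_supported T S' (spine_profile T R)"
  unfolding nbhd_supported_def
proof (intro allI impI)
  fix v assume "spine_profile T R v \<noteq> 0"
  then have vT: "v \<in> T" and np: "\<not> spine_desc T R v" using spine_profile_support[OF S R] by auto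
  have np1: "\<not> spine_desc T (Suc R) v" using np spine_desc_mono[OF S, of "Suc R" v R] by auto
  have "nbrs T v \<subseteq> {v \<in> T. \<not> spine_desc T (Suc R) v}"
  proof
    fix u assume u: "u \<in> nbrs T v"
    then have uT: "u \<in> T" unfolding nbrs_def by simp
    from u consider (c) j where "u = v @ [j]" | (p) j where "v = u @ [j]" unfolding nbrs_def by blast
    then have "\<not> spine_desc T (Suc R) u"
    proof cases
      case c
      show ?thesis
      proof
        assume "spine_desc T (Suc R) u"
        then have "spine_desc T (Suc R) v \<or> spine T (Suc R) = v @ [j]" using c spine_desc_snoc by simp
        then show False
        proof
          assume "spine_desc T (Suc R) v" then show False using np1 by simp
        next
          assume "spine T (Suc R) = v @ [j]"
          then have "v = spine T R" using spine_butlast[OF S, of R] by (metis butlast_snoc)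
          then show False using np spine_desc_spine by metis
        qed
      qed
    next
      case p
      then show ?thesis using np1 spine_desc_append by metis
    qed
    then show "u \<in> {v \<in> T. \<not> spine_desc T (Suc R) v}" using uT by simp
  qed
  then show "v \<in> S' \<and> nbrs T v \<subseteq> S'" using sub vT np1 by blast
qed

lemma deg_mass_spine_profile_le:
  assumes S: "Gamma_S_inf T" and R: "R \<ge> 1" and fS: "finite S'"
  shows "deg_mass T S' (spine_profile T R) \<le> 2 * real (hull_size T R) + 1"
proof -
  define f where "f = spine_profile T R"
  define W where "W = {v \<in> T. \<not> spine_desc T R v}"
  have fW: "finite W" unfolding W_def by (rule finite_not_spine_desc[OF S])
  have "deg_mass T S' f = (\<Sum>v\<in>S' \<inter> W. real (deg T v) * (f v)\<^sup>2)"
    unfolding deg_mass_def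
    by (rule sum.mono_neutral_right) (use fS spine_profile_support[OF S R] in \<open>auto simp: W_def f_def\<close>)
  also have "\<dots> \<le> (\<Sum>v\<in>S' \<inter> W. real (deg T v))"
  proof (rule sum_mono)
    fix v
    have "(f v)\<^sup>2 \<le> 1" using spine_profile_range[OF R, of T v] unfolding f_def by (simp add: abs_square_le_1)
    then show "real (deg T v) * (f v)\<^sup>2 \<le> real (deg T v)" by (simp add: mult_left_le)
  qed
  also have "\<dots> \<le> (\<Sum>v\<in>W. real (deg T v))" by (rule sum_mono2[OF fW]) auto
  also have "\<dots> \<le> 2 * real (hull_size T R) + 1" unfolding W_def by (rule sum_deg_not_spine_desc_le[OF S R])
  finally show ?thesis unfolding f_def .
qed

lemma grad_energy_spine_profile_le:
  assumes S: "Gamma_S_inf T" and R: "R \<ge> 1" and fS: "finite S'" and sp: "spine T ` {..R} \<subseteq> S'"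
  shows "grad_energy T S' (spine_profile T R) \<le> 4 / real R"
proof -
  define G where "G v = (\<Sum>u\<in>nbrs T v. (spine_profile T R u - spine_profile T R v)\<^sup>2)" for v
  have "grad_energy T S' (spine_profile T R) = (\<Sum>v\<in>spine T ` {..R}. G v)"
    unfolding grad_energy_def G_def[symmetric]
  proof (rule sum.mono_neutral_right[OF fS sp], rule ballI, rule ccontr)
    fix v assume v: "v \<in> S' - spine T ` {..R}" and "G v \<noteq> 0"
    then have "on_spine T R v" using sum_nbrs_spine_profile_diff_sq(2)[OF S R] unfolding G_def by blast
    then show False using v unfolding on_spine_def by auto
  qed
  also have "\<dots> \<le> real (card (spine T ` {..R})) * (2 / (real R)\<^sup>2)"
    by (rule sum_bounded_above) (use sum_nbrs_spine_profile_diff_sq(1)[OF S R] in \<open>auto simp: G_def\<close>)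
  also have "\<dots> \<le> real (Suc R) * (2 / (real R)\<^sup>2)"
  proof -
    have "card (spine T ` {..R}) \<le> card {..R}" by (rule card_image_le) simp
    then show ?thesis by (intro mult_right_mono) auto
  qed
  also have "\<dots> \<le> 4 / real R"
  proof -
    have "real (Suc R) * 2 \<le> 4 * real R" using R by simp
    then show ?thesis using R by (simp add: field_simps power2_eq_square)
  qed
  finally show ?thesis .
qed

text \<open>The pairing of f with the density is about f at the root, which is 1, so Cauchy--Schwarz
  bounds the energy of the density, at most its root value, from below.\<close>
lemma sq_le_dirichlet_form_mult_green_density:
  assumes G: "Gamma T" and fS: "finite S" and root: "[] \<in> S"
    and supf: "nbhd_supported T S f" and suph: "nbhd_supported T S (green_density T z N)"
    and f: "f [] = 1" "\<And>v. 0 \<le> f v" "\<And>v. f v \<le> 1" and z: "0 < z" "z < 1"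
  shows "(1 - z ^ Suc N)\<^sup>2 \<le> dirichlet_form T z S f f * green_density T z N []"
proof -
  have pt: "planar_tree T" using Gamma_planar_tree[OF G] .
  define h where "h = green_density T z N"
  have zN: "z ^ Suc N \<le> 1" using z by (intro power_le_one) auto
  have "(\<Sum>v\<in>S. f v * walk_prob T (Suc N) v) \<le> (\<Sum>v\<in>S. walk_prob T (Suc N) v)"
    by (intro sum_mono mult_left_le_one_le[OF walk_prob_nonneg f(2,3)])
  also have "\<dots> \<le> 1" by (rule walk_prob_sum_le_1[OF G fS])
  finally have "z ^ Suc N * (\<Sum>v\<in>S. f v * walk_prob T (Suc N) v) \<le> z ^ Suc N"
    using z by (simp add: mult_left_le)
  then have cross: "1 - z ^ Suc N \<le> dirichlet_form T z S f h"
    unfolding h_def dirichlet_form_green_density[OF G fS root] f(1) by simp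
  have "real (deg T []) * (f [])\<^sup>2 \<le> deg_mass T S f"
    unfolding deg_mass_def by (rule member_le_sum[OF root]) (auto simp: fS)
  then have "(1 - z) * 1 \<le> (1 - z) * deg_mass T S f"
    using deg_root[OF G] f(1) z by (intro mult_left_mono) auto
  then have pos: "dirichlet_form T z S f f > 0"
    using deg_mass_le_dirichlet_form[OF pt fS supf] z by (smt (verit))
  have "(1 - z ^ Suc N)\<^sup>2 \<le> (dirichlet_form T z S f h)\<^sup>2"
    using cross zN by (intro power_mono) auto
  also have "\<dots> \<le> dirichlet_form T z S f f * dirichlet_form T z S h h"
    by (rule dirichlet_form_Cauchy_Schwarz[OF pt fS supf suph[folded h_def]]) (use z pos in auto)
  also have "\<dots> \<le> dirichlet_form T z S f f * h []"
    unfolding h_def using dirichlet_form_green_density_le[OF G _ fS root] pos z by (intro mult_left_mono) auto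
  finally show ?thesis unfolding h_def .
qed

lemma dirichlet_form_spine_profile_le:
  assumes S: "Gamma_S_inf T" and R: "R \<ge> 1" and z: "0 \<le> z" "z \<le> 1" "1 - z \<le> x"
    and fS: "finite S'" and supp: "nbhd_supported T S' (spine_profile T R)" and sp: "spine T ` {..R} \<subseteq> S'"
  shows "dirichlet_form T z S' (spine_profile T R) (spine_profile T R)
       \<le> x * (2 * real (hull_size T R) + 1) + 2 / real R"
proof -
  have pt: "planar_tree T" using Gamma_planar_tree[OF Gamma_S_inf_Gamma[OF S]] .
  let ?f = "spine_profile T R"
  have "dirichlet_form T z S' ?f ?f = (1 - z) * deg_mass T S' ?f + z / 2 * grad_energy T S' ?f"
    by (rule dirichlet_form_energy[OF pt fS supp])
  also have "\<dots> \<le> x * (2 * real (hull_size T R) + 1) + 1 / 2 * (4 / real R)"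
  proof (rule add_mono)
    show "(1 - z) * deg_mass T S' ?f \<le> x * (2 * real (hull_size T R) + 1)"
      using deg_mass_spine_profile_le[OF S R fS] deg_mass_nonneg[of T S' ?f] z by (intro mult_mono) auto
    show "z / 2 * grad_energy T S' ?f \<le> 1 / 2 * (4 / real R)"
      using grad_energy_spine_profile_le[OF S R fS sp] grad_energy_nonneg[of T S' ?f] z
      by (intro mult_mono) auto
  qed
  finally show ?thesis by simp
qed

lemma one_le_Q_gen_mult_hull:
  assumes S: "Gamma_S_inf T" and R: "R \<ge> 1" and x: "0 < x" "x < 1"
  shows "1 \<le> Q_gen T x * (x * (2 * real (hull_size T R) + 1) + 2 / real R)"
proof -
  have G: "Gamma T" using Gamma_S_inf_Gamma[OF S] .
  have pt: "planar_tree T" using Gamma_planar_tree[OF G] .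
  define z where "z = sqrt (1 - x)"
  have z: "0 < z" "z < 1" unfolding z_def using x by auto
  have "1 - x \<le> z" unfolding z_def using x by (simp add: real_le_rsqrt power2_eq_square mult_le_cancel_left1)
  then have omz: "1 - z \<le> x" by simp
  define Eb where "Eb = x * (2 * real (hull_size T R) + 1) + 2 / real R"
  have Eb: "0 \<le> Eb" unfolding Eb_def using x by simp
  define f where "f = spine_profile T R"
  have bound: "(1 - z ^ Suc N)\<^sup>2 \<le> Eb * Q_gen T x" for N
  proof -
    define S' where "S' = {v \<in> T. \<not> spine_desc T (Suc R) v} \<union> ball_verts T (Suc N)"
    have fS: "finite S'" unfolding S'_def using finite_not_spine_desc[OF S] finite_ball_verts[OF pt] by simp
    have root: "[] \<in> S'" unfolding S'_def using root_in_ball_verts[OF pt] by simp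
    have supf: "nbhd_supported T S' f" unfolding f_def
      by (rule nbhd_supported_spine_profile[OF S R]) (auto simp: S'_def)
    have suph: "nbhd_supported T S' (green_density T z N)"
      by (rule nbhd_supported_mono[OF nbhd_supported_green_density[OF pt, of N "Suc N"]]) (auto simp: S'_def)
    have sp: "spine T ` {..R} \<subseteq> S'"
      using spine_desc_length[OF S, of "Suc R"] length_spine[OF S] spine_in_tree[OF S]
      unfolding S'_def by fastforce
    have Ef: "dirichlet_form T z S' f f \<le> Eb"
      unfolding Eb_def f_def using z omz supf[unfolded f_def]
      by (intro dirichlet_form_spine_profile_le[OF S R _ _ _ fS _ sp]) auto
    have "(1 - z ^ Suc N)\<^sup>2 \<le> dirichlet_form T z S' f f * green_density T z N []"
      using spine_profile_root[OF S] spine_profile_range[OF R]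
      by (intro sq_le_dirichlet_form_mult_green_density[OF G fS root supf suph]) (auto simp: f_def z)
    also have "\<dots> \<le> Eb * Q_gen T x"
      using Ef Eb green_density_root_le_Q_gen[OF G x] green_density_root_ge_1[OF G, of z N] z
      by (intro mult_mono) (auto simp: z_def)
    finally show ?thesis .
  qed
  have "(\<lambda>N. (1 - z ^ Suc N)\<^sup>2) \<longlonglongrightarrow> (1 - 0)\<^sup>2"
    by (intro tendsto_intros LIMSEQ_power_zero[THEN LIMSEQ_Suc]) (use z in auto)
  then have "(1 - 0)\<^sup>2 \<le> Eb * Q_gen T x"
    by (rule LIMSEQ_le_const2) (use bound in auto)
  then show ?thesis unfolding Eb_def by (simp add: mult.commute)
qed

section \<open>Regular variation along geometric sequences\<close>

lemma slowly_varying_pos: "slowly_varying L \<Longrightarrow> 0 < y \<Longrightarrow> 0 < L y"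
  unfolding slowly_varying_def by blast

lemma slowly_varying_geometric_lower:
  assumes L: "slowly_varying L" and "1 \<le> r" "0 < \<theta>" "\<theta> < 1"
  shows "\<exists>Y>0. \<forall>y\<ge>Y. \<forall>k. \<theta> ^ k * L y \<le> L (r ^ k * y)"
proof -
  have "((\<lambda>R. L (r * R) / L R) \<longlongrightarrow> 1) at_top" using L assms(2) unfolding slowly_varying_def by simp
  then have "eventually (\<lambda>R. \<theta> < L (r * R) / L R) at_top" using assms(4) by (rule order_tendstoD(1))
  then obtain N where N: "\<And>R. R \<ge> N \<Longrightarrow> \<theta> < L (r * R) / L R"
    unfolding eventually_at_top_linorder by blast
  have "\<theta> ^ k * L y \<le> L (r ^ k * y)" if y: "y \<ge> max N 1" for y k
  proof (induction k)
    case (Suc k)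
    have "y \<le> r ^ k * y" using mult_right_mono[OF one_le_power[OF assms(2)], of y k] y by simp
    then have "N \<le> r ^ k * y" "0 < L (r ^ k * y)"
      using y slowly_varying_pos[OF L, of "r ^ k * y"] by linarith+
    then have "\<theta> * L (r ^ k * y) < L (r * (r ^ k * y))"
      using N[of "r ^ k * y"] by (simp add: field_simps)
    moreover have "\<theta> * (\<theta> ^ k * L y) \<le> \<theta> * L (r ^ k * y)" using Suc assms(3) by simp
    ultimately show ?case by (simp add: mult.assoc)
  qed simp
  then show ?thesis by (intro exI[of _ "max N 1"]) auto
qed

lemma slowly_varying_geometric_upper:
  assumes L: "slowly_varying L" and "1 \<le> r" "1 < \<theta>"
  shows "\<exists>Y>0. \<forall>y\<ge>Y. \<forall>k. L (r ^ k * y) \<le> \<theta> ^ k * L y"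
proof -
  have "((\<lambda>R. L (r * R) / L R) \<longlongrightarrow> 1) at_top" using L assms(2) unfolding slowly_varying_def by simp
  then have "eventually (\<lambda>R. L (r * R) / L R < \<theta>) at_top" using assms(3) by (rule order_tendstoD(2))
  then obtain N where N: "\<And>R. R \<ge> N \<Longrightarrow> L (r * R) / L R < \<theta>"
    unfolding eventually_at_top_linorder by blast
  have "L (r ^ k * y) \<le> \<theta> ^ k * L y" if y: "y \<ge> max N 1" for y k
  proof (induction k)
    case (Suc k)
    have "y \<le> r ^ k * y" using mult_right_mono[OF one_le_power[OF assms(2)], of y k] y by simp
    then have "N \<le> r ^ k * y" "0 < L (r ^ k * y)"
      using y slowly_varying_pos[OF L, of "r ^ k * y"] by linarith+
    then have "L (r * (r ^ k * y)) < \<theta> * L (r ^ k * y)"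
      using N[of "r ^ k * y"] by (simp add: field_simps)
    moreover have "\<theta> * L (r ^ k * y) \<le> \<theta> * (\<theta> ^ k * L y)" using Suc assms(3) by simp
    ultimately show ?case by (simp add: mult.assoc)
  qed simp
  then show ?thesis by (intro exI[of _ "max N 1"]) auto
qed

lemma powr_power_mult:
  fixes r y d :: real
  assumes "0 < r" "0 < y"
  shows "(r ^ k * y) powr d = (r powr d) ^ k * y powr d"
  using assms by (simp add: powr_mult powr_realpow[symmetric] powr_powr powr_power mult.commute)

lemma geometric_lower_bound_nat:
  fixes V :: "nat \<Rightarrow> real"
  assumes L: "slowly_varying L" and "0 < \<theta>" "\<theta> < 1"
    and lower: "\<forall>R::nat. real R > R0 \<longrightarrow> real R powr d * L (real R) < V R"
  shows "\<exists>a c. 1 \<le> a \<and> 0 < c \<and> (\<forall>k. c * (2 powr d * \<theta>) ^ k < V (2 ^ k * a))"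
proof -
  obtain Y where Y: "Y > 0" "\<forall>y\<ge>Y. \<forall>k. \<theta> ^ k * L y \<le> L (2 ^ k * y)"
    using slowly_varying_geometric_lower[OF L _ assms(2,3), of 2] by auto
  define a where "a = nat \<lceil>max Y (R0 + 1)\<rceil>"
  have a: "Y \<le> real a" "R0 < real a" "1 \<le> a" unfolding a_def using Y(1) by linarith+
  define c where "c = real a powr d * L (real a)"
  have "c * (2 powr d * \<theta>) ^ k < V (2 ^ k * a)" for k
  proof -
    have "real a \<le> 2 ^ k * real a"
      using mult_right_mono[OF one_le_power[of "2::real" k], of "real a"] by simp
    then have big: "R0 < real (2 ^ k * a)" using a(2) by simp
    have "c * (2 powr d * \<theta>) ^ k = real (2 ^ k * a) powr d * (\<theta> ^ k * L (real a))"
      unfolding c_def using a by (simp add: powr_power_mult power_mult_distrib)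
    also have "\<dots> \<le> real (2 ^ k * a) powr d * L (real (2 ^ k * a))"
      using Y(2) a by (intro mult_left_mono) auto
    also have "\<dots> < V (2 ^ k * a)" using lower big by blast
    finally show ?thesis .
  qed
  moreover have "0 < c" unfolding c_def using a slowly_varying_pos[OF L] by simp
  ultimately show ?thesis using a(3) by blast
qed

lemma geometric_upper_bound_nat:
  fixes V :: "nat \<Rightarrow> real"
  assumes L: "slowly_varying L" and "1 < \<theta>"
    and upper: "\<forall>R::nat. real R > R0 \<longrightarrow> V R < real R powr d * L (real R)"
  shows "\<exists>a c. 1 \<le> a \<and> 0 < c \<and> (\<forall>k. V (2 ^ k * a) < c * (2 powr d * \<theta>) ^ k)"
proof -
  obtain Y where Y: "Y > 0" "\<forall>y\<ge>Y. \<forall>k. L (2 ^ k * y) \<le> \<theta> ^ k * L y"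
    using slowly_varying_geometric_upper[OF L _ assms(2), of 2] by auto
  define a where "a = nat \<lceil>max Y (R0 + 1)\<rceil>"
  have a: "Y \<le> real a" "R0 < real a" "1 \<le> a" unfolding a_def using Y(1) by linarith+
  define c where "c = real a powr d * L (real a)"
  have "V (2 ^ k * a) < c * (2 powr d * \<theta>) ^ k" for k
  proof -
    have "real a \<le> 2 ^ k * real a"
      using mult_right_mono[OF one_le_power[of "2::real" k], of "real a"] by simp
    then have "R0 < real (2 ^ k * a)" using a(2) by simp
    then have "V (2 ^ k * a) < real (2 ^ k * a) powr d * L (real (2 ^ k * a))" using upper by blast
    also have "\<dots> \<le> real (2 ^ k * a) powr d * (\<theta> ^ k * L (real a))"
      using Y(2) a by (intro mult_left_mono) auto
    also have "\<dots> = c * (2 powr d * \<theta>) ^ k"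
      unfolding c_def using a by (simp add: powr_power_mult power_mult_distrib)
    finally show ?thesis .
  qed
  moreover have "0 < c" unfolding c_def using a slowly_varying_pos[OF L] by simp
  ultimately show ?thesis using a(3) by blast
qed

lemma geometric_lower_bound_at_0:
  fixes Q :: "real \<Rightarrow> real"
  assumes l: "slowly_varying_at_0 l" and "1 \<le> r" "0 < \<theta>" "\<theta> < 1" "0 < x0"
    and lower: "\<forall>x. 0 < x \<and> x < x0 \<longrightarrow> x powr e * l x < Q x"
  shows "\<exists>y c. 0 < c \<and> (\<forall>k. 0 < 1 / (r ^ k * y) \<and> 1 / (r ^ k * y) \<le> x0 / 2
                    \<and> c * (r powr (- e) * \<theta>) ^ k < Q (1 / (r ^ k * y)))"
proof -
  have m: "slowly_varying (\<lambda>y. l (1 / y))" using l unfolding slowly_varying_at_0_def .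
  obtain Y where Y: "Y > 0" "\<forall>y\<ge>Y. \<forall>k. \<theta> ^ k * l (1 / y) \<le> l (1 / (r ^ k * y))"
    using slowly_varying_geometric_lower[OF m assms(2-4)] by auto
  define y where "y = max Y (2 / x0)"
  have y: "Y \<le> y" "2 / x0 \<le> y" "0 < y" unfolding y_def using Y(1) by auto
  define c where "c = y powr (- e) * l (1 / y)"
  have "0 < 1 / (r ^ k * y) \<and> 1 / (r ^ k * y) \<le> x0 / 2 \<and> c * (r powr (- e) * \<theta>) ^ k < Q (1 / (r ^ k * y))"
    for k
  proof (intro conjI)
    have "y \<le> r ^ k * y" using mult_right_mono[OF one_le_power[OF assms(2)], of y k] y by simp
    then have "1 / (r ^ k * y) \<le> 1 / y" using y by (simp add: frac_le)
    also have "\<dots> \<le> x0 / 2" using y assms(5) by (simp add: field_simps)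
    finally show x_le: "1 / (r ^ k * y) \<le> x0 / 2" .
    show x_pos: "0 < 1 / (r ^ k * y)" using y assms(2) by simp
    have "c * (r powr (- e) * \<theta>) ^ k = (r ^ k * y) powr (- e) * (\<theta> ^ k * l (1 / y))"
      unfolding c_def using y assms(2) by (simp add: powr_power_mult power_mult_distrib)
    also have "\<dots> \<le> (r ^ k * y) powr (- e) * l (1 / (r ^ k * y))"
      using Y(2) y by (intro mult_left_mono) auto
    also have "\<dots> = (1 / (r ^ k * y)) powr e * l (1 / (r ^ k * y))"
      using y assms(2) by (simp add: powr_divide powr_minus_divide)
    also have "\<dots> < Q (1 / (r ^ k * y))" using lower x_pos x_le assms(5) by simp
    finally show "c * (r powr (- e) * \<theta>) ^ k < Q (1 / (r ^ k * y))" .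
  qed
  moreover have "0 < c" unfolding c_def using y slowly_varying_pos[OF m] by simp
  ultimately show ?thesis by blast
qed

lemma geometric_upper_bound_at_0:
  fixes Q :: "real \<Rightarrow> real"
  assumes l: "slowly_varying_at_0 l" and "1 \<le> r" "1 < \<theta>" "0 < x0"
    and upper: "\<forall>x. 0 < x \<and> x < x0 \<longrightarrow> Q x < x powr e * l x"
  shows "\<exists>y c. 0 < c \<and> (\<forall>k. 0 < 1 / (r ^ k * y) \<and> 1 / (r ^ k * y) \<le> x0 / 2
                    \<and> Q (1 / (r ^ k * y)) < c * (r powr (- e) * \<theta>) ^ k)"
proof -
  have m: "slowly_varying (\<lambda>y. l (1 / y))" using l unfolding slowly_varying_at_0_def .
  obtain Y where Y: "Y > 0" "\<forall>y\<ge>Y. \<forall>k. l (1 / (r ^ k * y)) \<le> \<theta> ^ k * l (1 / y)"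
    using slowly_varying_geometric_upper[OF m assms(2,3)] by auto
  define y where "y = max Y (2 / x0)"
  have y: "Y \<le> y" "2 / x0 \<le> y" "0 < y" unfolding y_def using Y(1) by auto
  define c where "c = y powr (- e) * l (1 / y)"
  have "0 < 1 / (r ^ k * y) \<and> 1 / (r ^ k * y) \<le> x0 / 2 \<and> Q (1 / (r ^ k * y)) < c * (r powr (- e) * \<theta>) ^ k"
    for k
  proof (intro conjI)
    have "y \<le> r ^ k * y" using mult_right_mono[OF one_le_power[OF assms(2)], of y k] y by simp
    then have "1 / (r ^ k * y) \<le> 1 / y" using y by (simp add: frac_le)
    also have "\<dots> \<le> x0 / 2" using y assms(4) by (simp add: field_simps)
    finally show x_le: "1 / (r ^ k * y) \<le> x0 / 2" .
    show x_pos: "0 < 1 / (r ^ k * y)" using y assms(2) by simp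
    have "Q (1 / (r ^ k * y)) < (1 / (r ^ k * y)) powr e * l (1 / (r ^ k * y))"
      using upper x_pos x_le assms(4) by simp
    also have "\<dots> = (r ^ k * y) powr (- e) * l (1 / (r ^ k * y))"
      using y assms(2) by (simp add: powr_divide powr_minus_divide)
    also have "\<dots> \<le> (r ^ k * y) powr (- e) * (\<theta> ^ k * l (1 / y))"
      using Y(2) y by (intro mult_left_mono) auto
    also have "\<dots> = c * (r powr (- e) * \<theta>) ^ k"
      unfolding c_def using y assms(2) by (simp add: powr_power_mult power_mult_distrib)
    finally show "Q (1 / (r ^ k * y)) < c * (r powr (- e) * \<theta>) ^ k" .
  qed
  moreover have "0 < c" unfolding c_def using y slowly_varying_pos[OF m] by simp
  ultimately show ?thesis by blast
qed

lemma growth_exponent_nonneg: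
  fixes V :: "nat \<Rightarrow> real"
  assumes L: "slowly_varying L"
    and upper: "\<forall>R::nat. real R > R0 \<longrightarrow> V R < real R powr d * L (real R)"
    and one_le: "\<And>R. 1 \<le> R \<Longrightarrow> 1 \<le> V R"
  shows "0 \<le> d"
proof (rule ccontr)
  assume "\<not> 0 \<le> d"
  then have "1 < 2 powr (- d / 2)" by simp
  then obtain a c where a: "1 \<le> a" "0 < c" and V: "\<And>k. V (2 ^ k * a) < c * (2 powr d * 2 powr (- d / 2)) ^ k"
    using geometric_upper_bound_nat[OF L _ upper] by blast
  have r: "2 powr d * 2 powr (- d / 2) = 2 powr (d / 2)" by (simp add: powr_add[symmetric])
  have "2 powr (d / 2) < 1" using \<open>\<not> 0 \<le> d\<close> powr_less_one[of 2 "d / 2"] by simp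
  then obtain k where "(2 powr (d / 2)) ^ k < 1 / c" using real_arch_pow_inv[of "1 / c"] a(2) by auto
  then have "c * (2 powr (d / 2)) ^ k < 1" using a(2) by (simp add: field_simps)
  moreover have "1 \<le> V (2 ^ k * a)" using one_le a(1) by simp
  ultimately show False using V[of k] unfolding r by simp
qed

text \<open>The square of sqrt (2 / (1 + q)) is the inverse of the midpoint of 1 and q, hence lies
  strictly between 1 and 1 / q.\<close>
lemma sqrt_inverse_midpoint:
  fixes q :: real
  assumes "0 < q"
  defines "\<theta> \<equiv> sqrt (2 / (1 + q))"
  shows "q < 1 \<Longrightarrow> 1 < \<theta> \<and> q * (\<theta> * \<theta>) < 1"
    and "1 < q \<Longrightarrow> 0 < \<theta> \<and> \<theta> < 1 \<and> 1 < q * (\<theta> * \<theta>)"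
  using assms by (auto simp: \<theta>_def field_simps)

lemma two_mult_powr_powr: "((2::real) * 2 powr d) powr e = 2 powr ((1 + d) * e)"
  by (simp add: powr_add powr_powr[symmetric])

lemma ball_term_geometric_le:
  fixes P \<theta> y c1 v :: real
  assumes P: "0 < P" and \<theta>: "0 < \<theta>" "\<theta> < 1" and y: "0 < y" and c1: "0 < c1"
    and v: "c1 * (P * \<theta>) ^ k < v"
  shows "max (16 * real (2 ^ k * a)) (8 / (1 / ((2 * P) ^ k * y) * v))
       \<le> max (16 * real a) (8 * y / c1) * (2 / \<theta>) ^ k"
proof -
  define x where "x = 1 / ((2 * P) ^ k * y)"
  have x: "0 < x" unfolding x_def using P y by simp
  have c: "0 < c1 * (P * \<theta>) ^ k" using c1 P \<theta> by simp
  have le: "x * (c1 * (P * \<theta>) ^ k) \<le> x * v" using v x by (intro mult_left_mono) auto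
  have "0 < x * v" using x c v by simp
  then have pos: "0 < x * v * (x * (c1 * (P * \<theta>) ^ k))" using x c by simp
  have "8 / (1 / ((2 * P) ^ k * y) * v) \<le> 8 / (1 / ((2 * P) ^ k * y) * (c1 * (P * \<theta>) ^ k))"
    unfolding x_def[symmetric] by (rule divide_left_mono[OF le _ pos]) simp
  also have "\<dots> = (8 * y / c1) * (2 / \<theta>) ^ k"
    using P \<theta> y c1 by (simp add: power_mult_distrib power_divide field_simps)
  finally have u1: "8 / (1 / ((2 * P) ^ k * y) * v) \<le> (8 * y / c1) * (2 / \<theta>) ^ k" .
  have "(2::real) ^ k \<le> (2 / \<theta>) ^ k" using \<theta> by (intro power_mono) (auto simp: field_simps)
  then have u2: "16 * real (2 ^ k * a) \<le> (16 * real a) * (2 / \<theta>) ^ k"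
    by (simp add: mult.commute mult_left_mono)
  have "max (16 * real (2 ^ k * a)) (8 / (1 / ((2 * P) ^ k * y) * v))
      \<le> max ((16 * real a) * (2 / \<theta>) ^ k) ((8 * y / c1) * (2 / \<theta>) ^ k)"
    by (rule max.mono[OF u2 u1])
  also have "\<dots> = max (16 * real a) (8 * y / c1) * (2 / \<theta>) ^ k"
    using \<theta>(1) by (simp add: max_mult_distrib_right)
  finally show ?thesis .
qed

lemma hull_term_geometric_le:
  fixes P \<theta> y c1 h :: real
  assumes P: "0 < P" and \<theta>: "1 < \<theta>" and y: "0 < y" and a: "1 \<le> a"
    and h: "1 \<le> h" "h < c1 * (P * \<theta>) ^ k"
  shows "1 / ((2 * P) ^ k * y) * (2 * h + 1) + 2 / real (2 ^ k * a)
       \<le> (3 * c1 / y + 2 / real a) * (\<theta> / 2) ^ k"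
proof -
  have "1 / ((2 * P) ^ k * y) * (2 * h + 1) \<le> 1 / ((2 * P) ^ k * y) * (3 * (c1 * (P * \<theta>) ^ k))"
    using h P y by (intro mult_left_mono) auto
  also have "\<dots> = (3 * c1 / y) * (\<theta> / 2) ^ k"
    using P \<theta> y by (simp add: power_mult_distrib power_divide field_simps)
  finally have s1: "1 / ((2 * P) ^ k * y) * (2 * h + 1) \<le> (3 * c1 / y) * (\<theta> / 2) ^ k" .
  have "(1 / 2) ^ k \<le> (\<theta> / 2) ^ k" using \<theta> by (intro power_mono) auto
  then have s2: "2 / real (2 ^ k * a) \<le> (2 / real a) * (\<theta> / 2) ^ k"
    using a by (simp add: power_divide divide_simps mult_left_mono)
  show ?thesis using s1 s2 by (simp add: algebra_simps)
qed

text \<open>With x about R^-(1+d) both terms of the bound on Q are about R = x^(-1/(1+d)), which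
  is compared with x^(-1+ds/2) along R_k = 2^k a and x_k proportional to 2^(-(1+d)k).\<close>
lemma spectral_dim_lower_bound:
  fixes Q :: "real \<Rightarrow> real" and V :: "nat \<Rightarrow> real"
  assumes Q_upper: "\<And>x R. 0 < x \<Longrightarrow> x \<le> 3/4 \<Longrightarrow> 1 \<le> R \<Longrightarrow> Q x \<le> max (16 * real R) (8 / (x * V R))"
    and L: "slowly_varying L" and V_lower: "\<forall>R::nat. real R > R0 \<longrightarrow> real R powr d * L (real R) < V R"
    and x0: "0 < x0" "x0 < 1" and l: "slowly_varying_at_0 l"
    and Q_lower: "\<forall>x. 0 < x \<and> x < x0 \<longrightarrow> x powr (-1 + ds / 2) * l x < Q x"
    and d: "0 \<le> d"
  shows "2 * d / (1 + d) \<le> ds"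
proof (rule ccontr)
  assume "\<not> ?thesis"
  then have gt: "1 < (1 + d) * (1 - ds / 2)" using d by (simp add: field_simps)
  define P where "P = (2::real) powr d"
  define q where "q = (2 * P) powr (1 - ds / 2) / 2"
  have P: "0 < P" "1 \<le> 2 * P" unfolding P_def using d ge_one_powr_ge_zero[of 2 d] by auto
  have "2 powr 1 < 2 powr ((1 + d) * (1 - ds / 2))" using powr_less_mono[OF gt, of 2] by simp
  then have q: "1 < q" unfolding q_def P_def two_mult_powr_powr by simp
  define \<theta> where "\<theta> = sqrt (2 / (1 + q))"
  have \<theta>: "0 < \<theta>" "\<theta> < 1" "1 < q * (\<theta> * \<theta>)" using sqrt_inverse_midpoint[of q] q unfolding \<theta>_def by auto
  obtain a c1 where a: "1 \<le> a" "0 < c1" and V: "\<And>k. c1 * (P * \<theta>) ^ k < V (2 ^ k * a)"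
    using geometric_lower_bound_nat[OF L \<theta>(1,2) V_lower] unfolding P_def by blast
  obtain y c where c: "0 < c" and xk: "\<And>k. 0 < 1 / ((2 * P) ^ k * y) \<and> 1 / ((2 * P) ^ k * y) \<le> x0 / 2
      \<and> c * ((2 * P) powr (- (-1 + ds / 2)) * \<theta>) ^ k < Q (1 / ((2 * P) ^ k * y))"
    using geometric_lower_bound_at_0[OF l P(2) \<theta>(1,2) x0(1) Q_lower] by blast
  have y: "0 < y" using xk[of 0] by simp
  define C where "C = max (16 * real a) (8 * y / c1)"
  have "c * (2 * q * \<theta>) ^ k < C * (2 / \<theta>) ^ k" for k
  proof -
    define x where "x = 1 / ((2 * P) ^ k * y)"
    have x: "0 < x" "x \<le> 3/4" and Qx: "c * (2 * q * \<theta>) ^ k < Q x"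
      using xk[of k] x0(2) unfolding x_def q_def by auto
    note Qx
    also have "Q x \<le> max (16 * real (2 ^ k * a)) (8 / (x * V (2 ^ k * a)))"
      by (rule Q_upper[OF x]) (use a(1) in simp)
    also have "\<dots> \<le> C * (2 / \<theta>) ^ k"
      unfolding x_def C_def by (rule ball_term_geometric_le[OF P(1) \<theta>(1,2) y a(2) V])
    finally show ?thesis .
  qed
  moreover have "(2 * q * \<theta>) ^ k = (2 / \<theta>) ^ k * (q * (\<theta> * \<theta>)) ^ k" for k
  proof -
    have "2 * q * \<theta> = (2 / \<theta>) * (q * (\<theta> * \<theta>))" using \<theta>(1) by (simp add: field_simps)
    then show ?thesis by (simp only: power_mult_distrib)
  qed
  ultimately have bound: "c * (q * (\<theta> * \<theta>)) ^ k < C" for k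
    using \<theta>(1) by (simp add: mult.left_commute)
  obtain k where "C / c < (q * (\<theta> * \<theta>)) ^ k" using real_arch_pow[OF \<theta>(3)] by blast
  then show False using bound[of k] c by (simp add: field_simps)
qed

text \<open>Dually, with x about R^-(1+d) the factor multiplying Q is about 1/R = x^(1/(1+d)).\<close>
lemma spectral_dim_upper_bound:
  fixes Q :: "real \<Rightarrow> real" and H :: "nat \<Rightarrow> real"
  assumes Q_lower: "\<And>x R. 0 < x \<Longrightarrow> x < 1 \<Longrightarrow> 1 \<le> R \<Longrightarrow> 1 \<le> Q x * (x * (2 * H R + 1) + 2 / real R)"
    and H_ge: "\<And>R. 1 \<le> R \<Longrightarrow> 1 \<le> H R"
    and L: "slowly_varying L" and H_upper: "\<forall>R::nat. real R > R0 \<longrightarrow> H R < real R powr d * L (real R)"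
    and x0: "0 < x0" "x0 < 1" and l: "slowly_varying_at_0 l"
    and Q_upper: "\<forall>x. 0 < x \<and> x < x0 \<longrightarrow> Q x < x powr (-1 + ds / 2) * l x"
    and d: "0 \<le> d"
  shows "ds \<le> 2 * d / (1 + d)"
proof (rule ccontr)
  assume "\<not> ?thesis"
  then have lt: "(1 + d) * (1 - ds / 2) < 1" using d by (simp add: field_simps)
  define P where "P = (2::real) powr d"
  define \<rho> where "\<rho> = (2 * P) powr (1 - ds / 2) / 2"
  have P: "0 < P" "1 \<le> 2 * P" unfolding P_def using d ge_one_powr_ge_zero[of 2 d] by auto
  have "2 powr ((1 + d) * (1 - ds / 2)) < 2 powr 1" using powr_less_mono[OF lt, of 2] by simp
  then have \<rho>: "0 < \<rho>" "\<rho> < 1" unfolding \<rho>_def P_def two_mult_powr_powr by simp_all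
  define \<theta> where "\<theta> = sqrt (2 / (1 + \<rho>))"
  have \<theta>: "1 < \<theta>" "\<rho> * (\<theta> * \<theta>) < 1" using sqrt_inverse_midpoint[of \<rho>] \<rho> unfolding \<theta>_def by auto
  obtain a c1 where a: "1 \<le> a" "0 < c1" and H: "\<And>k. H (2 ^ k * a) < c1 * (P * \<theta>) ^ k"
    using geometric_upper_bound_nat[OF L \<theta>(1) H_upper] unfolding P_def by blast
  obtain y c where c: "0 < c" and xk: "\<And>k. 0 < 1 / ((2 * P) ^ k * y) \<and> 1 / ((2 * P) ^ k * y) \<le> x0 / 2
      \<and> Q (1 / ((2 * P) ^ k * y)) < c * ((2 * P) powr (- (-1 + ds / 2)) * \<theta>) ^ k"
    using geometric_upper_bound_at_0[OF l P(2) \<theta>(1) x0(1) Q_upper] by blast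
  have y: "0 < y" using xk[of 0] by simp
  define C where "C = 3 * c1 / y + 2 / real a"
  have bound: "1 \<le> (c * C) * (\<rho> * (\<theta> * \<theta>)) ^ k" for k
  proof -
    define x where "x = 1 / ((2 * P) ^ k * y)"
    define S where "S = x * (2 * H (2 ^ k * a) + 1) + 2 / real (2 ^ k * a)"
    have "0 < x" "x \<le> x0 / 2" and Qx: "Q x < c * (2 * \<rho> * \<theta>) ^ k"
      using xk[of k] unfolding x_def \<rho>_def by auto
    then have x: "0 < x" "x < 1" using x0(2) by auto
    have Rk: "1 \<le> 2 ^ k * a" using a(1) by simp
    have H1: "1 \<le> H (2 ^ k * a)" by (rule H_ge[OF Rk])
    have S: "S \<le> C * (\<theta> / 2) ^ k"
      unfolding S_def x_def C_def by (rule hull_term_geometric_le[OF P(1) \<theta>(1) y a(1) H1 H])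
    have S_pos: "0 < S" unfolding S_def using x(1) H1 a(1) by (intro add_pos_pos) auto
    have one: "1 \<le> Q x * S" unfolding S_def by (rule Q_lower[OF x Rk])
    then have "0 < Q x" using S_pos by (smt (verit) mult_nonpos_nonneg)
    have "1 \<le> Q x * (C * (\<theta> / 2) ^ k)"
      using one S \<open>0 < Q x\<close> by (meson mult_left_mono less_imp_le order_trans)
    also have "\<dots> \<le> (c * (2 * \<rho> * \<theta>) ^ k) * (C * (\<theta> / 2) ^ k)"
      using Qx S S_pos by (intro mult_right_mono) auto
    also have "\<dots> = (c * C) * (\<rho> * (\<theta> * \<theta>)) ^ k"
    proof -
      have "(2 * \<rho> * \<theta>) * (\<theta> / 2) = \<rho> * (\<theta> * \<theta>)" by (simp add: field_simps)
      then have "(2 * \<rho> * \<theta>) ^ k * (\<theta> / 2) ^ k = (\<rho> * (\<theta> * \<theta>)) ^ k"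
        by (simp only: power_mult_distrib[symmetric])
      then show ?thesis by (simp only: mult_ac)
    qed
    finally show ?thesis .
  qed
  have "0 < C" unfolding C_def using a(1,2) y by (intro add_pos_pos) auto
  then have cC: "0 < c * C" using c by simp
  then obtain k where "(\<rho> * (\<theta> * \<theta>)) ^ k < 1 / (c * C)"
    using real_arch_pow_inv[of "1 / (c * C)", OF _ \<theta>(2)] by auto
  then show False using bound[of k] cC by (simp add: field_simps)
qed

theorem theorem1:
  fixes T :: "nat list set" and dh dhb ds :: real
  assumes "Gamma_S_inf T"
    and "has_hausdorff_dim T dh"
    and "has_hull_dim T dhb"
    and "has_spectral_dim T ds"
  shows "2 * dh / (1 + dh) \<le> ds \<and> ds \<le> 2 * dhb / (1 + dhb)"
proof -
  have G: "Gamma T" using Gamma_S_inf_Gamma[OF assms(1)] .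
  obtain R0 Llo Lhi where ball: "slowly_varying Llo" "slowly_varying Lhi"
    "\<forall>R::nat. real R > R0 \<longrightarrow> real R powr dh * Llo (real R) < real (ball_size T R)"
    "\<forall>R::nat. real R > R0 \<longrightarrow> real (ball_size T R) < real R powr dh * Lhi (real R)"
    using assms(2) unfolding has_hausdorff_dim_def by blast
  obtain R0' Hlo Hhi where hull: "slowly_varying Hhi"
    "\<forall>R::nat. real R > R0' \<longrightarrow> real (hull_size T R) < real R powr dhb * Hhi (real R)"
    using assms(3) unfolding has_hull_dim_def by blast
  obtain x0 llo lhi where spec: "0 < x0" "x0 < 1" "slowly_varying_at_0 llo" "slowly_varying_at_0 lhi"
    "\<forall>x. 0 < x \<and> x < x0 \<longrightarrow> x powr (-1 + ds / 2) * llo x < Q_gen T x"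
    "\<forall>x. 0 < x \<and> x < x0 \<longrightarrow> Q_gen T x < x powr (-1 + ds / 2) * lhi x"
    using assms(4) unfolding has_spectral_dim_def by blast
  have ball_ge: "1 \<le> real (ball_size T R)" if "1 \<le> R" for R
    using one_le_ball_size[OF G that] by simp
  have hull_ge: "1 \<le> real (hull_size T R)" if "1 \<le> R" for R
  proof -
    have "R \<le> hull_size T R" unfolding hull_size_def by simp
    then show ?thesis using that by simp
  qed
  have dh: "0 \<le> dh" by (rule growth_exponent_nonneg[OF ball(2) ball(4) ball_ge])
  have dhb: "0 \<le> dhb" by (rule growth_exponent_nonneg[OF hull hull_ge])
  have "2 * dh / (1 + dh) \<le> ds"
    using Q_gen_le_ball_size[OF G] by (rule spectral_dim_lower_bound[OF _ ball(1,3) spec(1,2,3,5) dh])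
  moreover have "ds \<le> 2 * dhb / (1 + dhb)"
    using one_le_Q_gen_mult_hull[OF assms(1)]
    by (rule spectral_dim_upper_bound[OF _ hull_ge hull spec(1,2,4,6) dhb])
  ultimately show ?thesis ..
qed

end
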